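(* Let $F\in\mathbb{C}[x,y,z]$ be an irreducible polynomial such that none of its three first-order partial derivatives is identically zero, and let $V$ be as below. For $i=1,2,3$ let \[ V_i=\{(x,x',y,y',z_1,z_2,z_3,z_4)\in V: F_i(x,y,z_1)F_i(x,y',z_2)F_i(x',y,z_3)F_i(x',y',z_4)=0\}, \] and $V_0=V_1\cup V_2\cup V_3$. Let $\rho:\mathbb{C}^8\to\mathbb{C}^6$ be $\rho(x,x',y,y',z_1,z_2,z_3,z_4)=(x,y,z_1,x',y',z_4)$. Then $\mathrm{cl}(\rho(V_0))$ has dimension at most $3$.
   Context: $V=\{(x,x',y,y',z_1,z_2,z_3,z_4)\in\mathbb{C}^8: F(x,y,z_1)=F(x,y',z_2)=F(x',y,z_3)=F(x',y',z_4)=0\}$. $F_i$ denotes the partial derivative of $F$ with respect to its $i$-th variable. $\mathrm{cl}$ denotes Zariski closure. *)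

theory Defs
  imports "HOL-Computational_Algebra.Polynomial" "HOL-Library.Extended_Nat"
begin

text \<open>A polynomial F in C[x,y,z] is represented as an element of
  complex poly poly poly: the outermost variable is z, the middle one y,
  the innermost one x.\<close>

definition eval3 :: "complex poly poly poly \<Rightarrow> complex \<Rightarrow> complex \<Rightarrow> complex \<Rightarrow> complex" where
  "eval3 F x y z = poly (poly (poly F [:[:z:]:]) [:y:]) x"

text \<open>Partial derivatives with respect to x (1st), y (2nd), z (3rd variable).\<close>
definition pd1 :: "complex poly poly poly \<Rightarrow> complex poly poly poly" where
  "pd1 F = map_poly (map_poly pderiv) F"

definition pd2 :: "complex poly poly poly \<Rightarrow> complex poly poly poly" where
  "pd2 F = map_poly pderiv F"

definition pd3 :: "complex poly poly poly \<Rightarrow> complex poly poly poly" where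
  "pd3 F = pderiv F"

definition V :: "complex poly poly poly \<Rightarrow> complex list set" where
  "V F = {[x, x', y, y', z1, z2, z3, z4] | x x' y y' z1 z2 z3 z4.
            eval3 F x y z1 = 0 \<and> eval3 F x y' z2 = 0 \<and>
            eval3 F x' y z3 = 0 \<and> eval3 F x' y' z4 = 0}"

definition Vi :: "complex poly poly poly \<Rightarrow> complex poly poly poly \<Rightarrow> complex list set" where
  "Vi F G = {[x, x', y, y', z1, z2, z3, z4] | x x' y y' z1 z2 z3 z4.
            [x, x', y, y', z1, z2, z3, z4] \<in> V F \<and>
            eval3 G x y z1 * eval3 G x y' z2 * eval3 G x' y z3 * eval3 G x' y' z4 = 0}"

definition V0 :: "complex poly poly poly \<Rightarrow> complex list set" where
  "V0 F = Vi F (pd1 F) \<union> Vi F (pd2 F) \<union> Vi F (pd3 F)"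

definition rho :: "complex list \<Rightarrow> complex list" where
  "rho v = [v!0, v!2, v!4, v!1, v!3, v!7]"

inductive poly_fun :: "nat \<Rightarrow> (complex list \<Rightarrow> complex) \<Rightarrow> bool" for n where
  pf_const: "poly_fun n (\<lambda>v. c)"
| pf_var: "i < n \<Longrightarrow> poly_fun n (\<lambda>v. v ! i)"
| pf_add: "poly_fun n p \<Longrightarrow> poly_fun n q \<Longrightarrow> poly_fun n (\<lambda>v. p v + q v)"
| pf_mult: "poly_fun n p \<Longrightarrow> poly_fun n q \<Longrightarrow> poly_fun n (\<lambda>v. p v * q v)"

definition zariski_closed :: "nat \<Rightarrow> complex list set \<Rightarrow> bool" where
  "zariski_closed n S \<longleftrightarrow>
     (\<exists>P. (\<forall>p\<in>P. poly_fun n p) \<and> S = {v. length v = n \<and> (\<forall>p\<in>P. p v = 0)})"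

definition zariski_closure :: "nat \<Rightarrow> complex list set \<Rightarrow> complex list set" where
  "zariski_closure n S = \<Inter>{T. zariski_closed n T \<and> S \<subseteq> T}"

definition zariski_irreducible :: "nat \<Rightarrow> complex list set \<Rightarrow> bool" where
  "zariski_irreducible n Z \<longleftrightarrow> zariski_closed n Z \<and> Z \<noteq> {} \<and>
     (\<forall>A B. zariski_closed n A \<longrightarrow> zariski_closed n B \<longrightarrow> Z \<subseteq> A \<union> B \<longrightarrow> Z \<subseteq> A \<or> Z \<subseteq> B)"

text \<open>Dimension (Krull dimension of the Zariski topology): supremum of lengths k
  of chains Z_0 < Z_1 < ... < Z_k of irreducible closed subsets of S.
  (The empty set gets dimension 0 rather than -1; irrelevant for upper bounds.)\<close>
definition zariski_dim :: "nat \<Rightarrow> complex list set \<Rightarrow> enat" where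
  "zariski_dim n S = Sup {enat k | k. \<exists>Z :: nat \<Rightarrow> complex list set.
      (\<forall>i\<le>k. zariski_irreducible n (Z i) \<and> Z i \<subseteq> S) \<and> (\<forall>i<k. Z i \<subset> Z (Suc i))}"

end

theory Submission
  imports Defs "HOL-Computational_Algebra.Computational_Algebra" "HOL-Computational_Algebra.Field_as_Ring"
begin

text \<open>A point of \<open>\<rho>(V\<^sub>0)\<close> is \<open>w = (x, y, z\<^sub>1, x', y', z\<^sub>4)\<close> with \<open>F(x,y,z\<^sub>1) = F(x',y',z\<^sub>4) = 0\<close>.
  As \<open>F\<close> is irreducible and does not divide \<open>G = F\<^sub>i\<close>, some combination \<open>A F + B G\<close> is a nonzero
  \<open>R \<in> \<complex>[x,y]\<close>, so the vanishing of one of the four \<open>G\<close>-factors on \<open>V\<^sub>i\<close> forces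
  \<open>G(x,y,z\<^sub>1) R(x,y') R(x',y) G(x',y',z\<^sub>4) = 0\<close>. On an irreducible closed \<open>Z\<close> inside the closure one
  factor of this product vanishes identically; together with the two equations \<open>F = 0\<close> this lets
  three of the six coordinates be added one at a time, each algebraic over the ones before.

  Dimension is measured by a Hilbert-function count. If, on \<open>Z\<close>, all coordinates are successively
  algebraic over \<open>k\<close> of them, then after multiplication by a power of one function not vanishing
  on \<open>Z\<close> the monomials of multidegree at most \<open>D\<close> span a space of dimension \<open>O(D\<^sup>k)\<close>. A strict
  chain \<open>Z\<^sub>0 \<subset> \<dots> \<subset> Z\<^bsub>k+1\<^esub>\<close> of irreducible closed sets, on the other hand, yields \<open>k + 1\<close> functions
  algebraically independent on \<open>Z\<^bsub>k+1\<^esub>\<close>, and their \<open>(D+1)\<^bsup>k+1\<^esup>\<close> monomials cannot all fit.\<close>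

text \<open>On the right only powers \<open>(c\<^sub>m x)\<^sup>i\<close> with \<open>i < j\<close> occur: \<open>c\<^sub>m x\<close> is integral over the coefficients.\<close>

lemma power_mult_reduce_by_relation:
  fixes c :: "nat \<Rightarrow> 'a::comm_ring_1"
  assumes rel: "(\<Sum>l\<le>m. c l * x^l) = 0" and m0: "0 < m" and jm: "m \<le> j"
  shows "c m ^ j * x^j = - (\<Sum>l<m. (c l * c m ^ (m-1-l)) * (c m ^ (j-m+l) * x^(j-m+l)))"
proof -
  have rel': "c m * x^m = - (\<Sum>l<m. c l * x^l)"
    using rel by (simp add: lessThan_Suc_atMost[symmetric] eq_neg_iff_add_eq_0 add.commute)
  have xj: "x^j = x^(j-m) * x^m" using jm by (simp flip: power_add)
  have cj: "c m ^ j = c m ^ (j-1) * c m" using m0 jm by (cases j) auto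
  have "c m ^ j * x^j = c m ^ (j-1) * x^(j-m) * (c m * x^m)"
    by (simp only: xj cj mult_ac)
  also have "\<dots> = - (\<Sum>l<m. c m ^ (j-1) * x^(j-m) * (c l * x^l))"
    by (simp add: rel' sum_distrib_left)
  also have "(\<Sum>l<m. c m ^ (j-1) * x^(j-m) * (c l * x^l)) =
             (\<Sum>l<m. (c l * c m ^ (m-1-l)) * (c m ^ (j-m+l) * x^(j-m+l)))"
  proof (rule sum.cong[OF refl])
    fix l assume "l \<in> {..<m}"
    then have "j - 1 = (m - 1 - l) + (j - m + l)" using jm by auto
    then show "c m ^ (j-1) * x^(j-m) * (c l * x^l) = (c l * c m ^ (m-1-l)) * (c m ^ (j-m+l) * x^(j-m+l))"
      by (simp only: power_add mult_ac)
  qed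
  finally show ?thesis .
qed

lemma power_count_lt:
  fixes C r e k D :: nat
  assumes "D = C * (r*e+1)^k"
  shows "C * (r*D*e+1)^k < (D+1)^Suc k"
proof -
  have "r*D*e + 1 \<le> (r*e+1)*(D+1)" by (simp add: algebra_simps)
  then have "C * (r*D*e+1)^k \<le> C * ((r*e+1)*(D+1))^k" by (simp add: power_mono)
  also have "\<dots> = (C * (r*e+1)^k) * (D+1)^k" by (simp only: power_mult_distrib mult.assoc)
  also have "\<dots> = D * (D+1)^k" using assms by simp
  also have "\<dots> < (D+1)^Suc k" by simp
  finally show ?thesis .
qed

lemma power_count_insert_le:
  fixes b C D e k m :: nat
  assumes "b \<le> C * (2*D*e + D + 1)^k"
  shows "b * m \<le> (m * C * (2*e+1)^k) * (D+1)^k"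
proof -
  have "2*D*e + D + 1 \<le> (2*e+1)*(D+1)" by (simp add: algebra_simps)
  then have "(2*D*e + D + 1)^k \<le> ((2*e+1)*(D+1))^k" by (rule power_mono) simp
  then have "(2*D*e + D + 1)^k \<le> (2*e+1)^k * (D+1)^k" by (simp only: power_mult_distrib)
  then have "b \<le> C * ((2*e+1)^k * (D+1)^k)" using assms by (meson le_trans mult_le_mono2)
  then have "b * m \<le> C * ((2*e+1)^k * (D+1)^k) * m" by (rule mult_le_mono1)
  also have "\<dots> = (m * C * (2*e+1)^k) * (D+1)^k" by (simp add: mult_ac)
  finally show ?thesis .
qed

lemma fract_poly_clear_denominator:
  fixes p :: "'a :: {factorial_ring_gcd,semiring_gcd_mult_normalize} fract poly"
  shows "\<exists>d m. d \<noteq> 0 \<and> smult (to_fract d) p = fract_poly m"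
proof -
  obtain c p' where p: "p = smult c (fract_poly p')" "content p' = 1"
    by (rule content_decompose_fract)
  define a b where "a = fst (quot_of_fract c)" and "b = snd (quot_of_fract c)"
  have b0: "b \<noteq> 0" by (simp add: b_def snd_quot_of_fract_nonzero)
  have c: "c = to_fract a / to_fract b"
    using Fract_quot_of_fract[of c] by (simp add: a_def b_def Fract_conv_to_fract)
  have "smult (to_fract b) p = smult (to_fract a) (fract_poly p')"
    using b0 by (simp add: p c)
  also have "\<dots> = fract_poly (smult a p')" by simp
  finally show ?thesis using b0 by blast
qed

lemma fract_poly_clear_denominators:
  fixes \<mu> :: "'b \<Rightarrow> 'a :: {factorial_ring_gcd,semiring_gcd_mult_normalize} fract poly"
  assumes "finite S"
  shows "\<exists>D. D \<noteq> 0 \<and> (\<forall>f\<in>S. \<exists>m. smult (to_fract D) (\<mu> f) = fract_poly m)"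
  using assms
proof (induction S rule: finite_induct)
  case empty then show ?case by (intro exI[of _ 1]) auto
next
  case (insert f S)
  then obtain D where D: "D \<noteq> 0" "\<forall>f\<in>S. \<exists>m. smult (to_fract D) (\<mu> f) = fract_poly m" by blast
  obtain d m where dm: "d \<noteq> 0" "smult (to_fract d) (\<mu> f) = fract_poly m"
    using fract_poly_clear_denominator by blast
  have "\<forall>g\<in>insert f S. \<exists>m. smult (to_fract (d * D)) (\<mu> g) = fract_poly m"
  proof
    fix g assume "g \<in> insert f S"
    then show "\<exists>m. smult (to_fract (d * D)) (\<mu> g) = fract_poly m"
    proof
      assume "g = f"
      have "smult (to_fract (d * D)) (\<mu> g) = smult (to_fract D) (smult (to_fract d) (\<mu> f))"
        using \<open>g = f\<close> by (simp add: mult.commute)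
      also have "\<dots> = fract_poly (smult D m)" using dm by simp
      finally show ?thesis by blast
    next
      assume "g \<in> S"
      then obtain m' where "smult (to_fract D) (\<mu> g) = fract_poly m'" using D by blast
      then have "smult (to_fract (d * D)) (\<mu> g) = smult (to_fract d) (fract_poly m')"
        by (metis mult.commute smult_smult to_fract_mult)
      then show ?thesis by (intro exI[of _ "smult d m'"]) simp
    qed
  qed
  then show ?case using D dm by (intro exI[of _ "d * D"]) simp
qed

lemma fract_poly_sum: "fract_poly (sum f S) = (\<Sum>x\<in>S. fract_poly (f x))"
  by (induction S rule: infinite_finite_induct) auto

lemma smult_sum_right: "smult c (sum f S) = (\<Sum>x\<in>S. smult c (f x))"
  by (induction S rule: infinite_finite_induct) (auto simp: smult_add_right)

lemma combination_of_least_degree_dvd: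
  fixes p :: "'i \<Rightarrow> 'a::field poly"
  assumes fin: "finite I" and i: "i \<in> I" and nz: "(\<Sum>j\<in>I. \<mu> j * p j) \<noteq> 0"
    and least: "\<And>\<mu>'. (\<Sum>j\<in>I. \<mu>' j * p j) \<noteq> 0 \<Longrightarrow>
                 degree (\<Sum>j\<in>I. \<mu> j * p j) \<le> degree (\<Sum>j\<in>I. \<mu>' j * p j)"
  shows "(\<Sum>j\<in>I. \<mu> j * p j) dvd p i"
proof (rule ccontr)
  define g where "g = (\<Sum>j\<in>I. \<mu> j * p j)"
  assume "\<not> (\<Sum>j\<in>I. \<mu> j * p j) dvd p i"
  then have nd: "\<not> g dvd p i" unfolding g_def .
  define \<mu>' where "\<mu>' = (\<lambda>j. (if j = i then 1 else 0) - (p i div g) * \<mu> j)"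
  have "(\<Sum>j\<in>I. \<mu>' j * p j) = (\<Sum>j\<in>I. if j = i then p j else 0) - (\<Sum>j\<in>I. (p i div g) * (\<mu> j * p j))"
    unfolding \<mu>'_def by (auto simp: algebra_simps sum_subtractf intro!: sum.cong)
  also have "\<dots> = p i - (p i div g) * g"
    using fin i by (simp add: g_def sum_distrib_left)
  also have "\<dots> = p i mod g" by (simp add: minus_div_mult_eq_mod)
  finally have comb: "(\<Sum>j\<in>I. \<mu>' j * p j) = p i mod g" .
  have "p i mod g \<noteq> 0" using nd by (simp add: mod_eq_0_iff_dvd)
  moreover have "degree (p i mod g) < degree g"
    using degree_mod_less_degree nz nd unfolding g_def by blast
  ultimately show False using least[of \<mu>'] comb unfolding g_def by simp
qed

lemma coprime_set_fract_combination_one: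
  fixes S :: "'a :: {factorial_ring_gcd,semiring_gcd_mult_normalize} poly set"
  assumes fin: "finite S" and nz: "\<exists>f\<in>S. f \<noteq> 0"
    and cop: "\<forall>d. (\<forall>f\<in>S. d dvd f) \<longrightarrow> is_unit d"
  shows "\<exists>\<mu>. (\<Sum>f\<in>S. \<mu> f * fract_poly f) = 1"
proof -
  define \<Phi> where "\<Phi> \<mu> = (\<Sum>f\<in>S. \<mu> f * fract_poly f)" for \<mu>
  obtain f0 where f0: "f0 \<in> S" "f0 \<noteq> 0" using nz by blast
  have "\<Phi> (\<lambda>f. if f = f0 then 1 else 0) = (\<Sum>f\<in>S. if f = f0 then fract_poly f else 0)"
    unfolding \<Phi>_def by (rule sum.cong) auto
  also have "\<dots> = fract_poly f0" using fin f0 by (simp add: sum.delta')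
  finally have "\<Phi> (\<lambda>f. if f = f0 then 1 else 0) = fract_poly f0" .
  then have "\<Phi> (\<lambda>f. if f = f0 then 1 else 0) \<noteq> 0" using f0 by simp
  then obtain \<mu> where g0: "\<Phi> \<mu> \<noteq> 0" and least: "\<And>\<mu>'. \<Phi> \<mu>' \<noteq> 0 \<Longrightarrow> degree (\<Phi> \<mu>) \<le> degree (\<Phi> \<mu>')"
    using ex_has_least_nat[of "\<lambda>\<mu>. \<Phi> \<mu> \<noteq> 0" _ "\<lambda>\<mu>. degree (\<Phi> \<mu>)"] by blast
  define g where "g = \<Phi> \<mu>"
  have gdvd: "g dvd fract_poly f" if "f \<in> S" for f
    using combination_of_least_degree_dvd[OF fin that, of \<mu> fract_poly] g0 least
    unfolding g_def \<Phi>_def by blast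
  obtain c g' where cg: "g = smult c (fract_poly g')" "content g' = 1"
    by (rule content_decompose_fract)
  have "fract_poly g' dvd g" unfolding cg(1) by (rule dvd_smult) simp
  then have "g' dvd f" if "f \<in> S" for f
    using dvd_trans gdvd[OF that] fract_poly_dvdD[OF _ cg(2)] by blast
  then have "is_unit g'" using cop by blast
  then have "degree g' = 0" by (auto elim!: is_unit_polyE)
  then have "degree g = 0" using cg(1) degree_map_poly[of to_fract g'] by simp
  then have k: "g = [:coeff g 0:]" by (rule degree_0_id[symmetric])
  have k0: "coeff g 0 \<noteq> 0" using k g0 g_def by auto
  have "(\<Sum>f\<in>S. smult (inverse (coeff g 0)) (\<mu> f) * fract_poly f) = smult (inverse (coeff g 0)) g"
    by (simp add: g_def \<Phi>_def smult_sum_right)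
  also have "\<dots> = 1" using k k0 by (metis one_pCons smult_pCons smult_0_right left_inverse)
  finally show ?thesis by (rule exI[of _ "\<lambda>f. smult (inverse (coeff g 0)) (\<mu> f)"])
qed

lemma coprime_set_const_combination:
  fixes S :: "'a :: {factorial_ring_gcd,semiring_gcd_mult_normalize} poly set"
  assumes fin: "finite S" and nz: "\<exists>f\<in>S. f \<noteq> 0"
    and cop: "\<forall>d. (\<forall>f\<in>S. d dvd f) \<longrightarrow> is_unit d"
  shows "\<exists>l r. r \<noteq> 0 \<and> (\<Sum>f\<in>S. l f * f) = [:r:]"
proof -
  obtain \<mu> where \<mu>: "(\<Sum>f\<in>S. \<mu> f * fract_poly f) = 1"
    using coprime_set_fract_combination_one[OF assms] by blast
  obtain D where D: "D \<noteq> 0" "\<forall>f\<in>S. \<exists>m. smult (to_fract D) (\<mu> f) = fract_poly m"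
    using fract_poly_clear_denominators[OF fin, of \<mu>] by blast
  from bchoice[OF D(2)] obtain l where l: "\<forall>f\<in>S. smult (to_fract D) (\<mu> f) = fract_poly (l f)"
    by blast
  have "fract_poly (\<Sum>f\<in>S. l f * f) = (\<Sum>f\<in>S. fract_poly (l f) * fract_poly f)"
    by (simp add: fract_poly_sum)
  also have "\<dots> = (\<Sum>f\<in>S. smult (to_fract D) (\<mu> f * fract_poly f))"
    by (rule sum.cong) (simp_all add: l[rule_format, symmetric])
  also have "\<dots> = fract_poly [:D:]"
    by (simp add: smult_sum_right[symmetric] \<mu> poly_eq_iff coeff_map_poly coeff_pCons split: nat.splits)
  finally have "(\<Sum>f\<in>S. l f * f) = [:D:]" by (simp only: fract_poly_eq_iff)
  then show ?thesis using D by blast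
qed

lemma map_poly_eq_mult_imp_scalar:
  fixes F :: "'a::idom poly"
  assumes "map_poly \<phi> F = F * H" "\<phi> 0 = 0" "map_poly \<phi> F \<noteq> 0"
  shows "\<exists>h. (\<forall>l. \<phi> (coeff F l) = h * coeff F l) \<and> (\<exists>l. \<phi> (coeff F l) \<noteq> 0)"
proof -
  have F0: "F \<noteq> 0" and H0: "H \<noteq> 0" using assms(1,3) by auto
  have "degree F + degree H = degree (map_poly \<phi> F)"
    using assms(1) degree_mult_eq[OF F0 H0] by simp
  also have "\<dots> \<le> degree F" by (rule map_poly_degree_leq)
  finally have "degree H = 0" by simp
  then have Hc: "H = [:coeff H 0:]" by (rule degree_0_id[symmetric])
  have "\<phi> (coeff F l) = coeff H 0 * coeff F l" for l
  proof -
    have "coeff (map_poly \<phi> F) l = coeff (F * [:coeff H 0:]) l" using assms(1) Hc by metis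
    then show ?thesis by (simp add: coeff_map_poly assms(2) mult.commute)
  qed
  moreover have "\<exists>l. \<phi> (coeff F l) \<noteq> 0"
  proof (rule ccontr)
    assume "\<not> (\<exists>l. \<phi> (coeff F l) \<noteq> 0)"
    then have "map_poly \<phi> F = 0" by (simp add: poly_eq_iff coeff_map_poly assms(2))
    then show False using assms(3) by simp
  qed
  ultimately show ?thesis by blast
qed

lemma pderiv_neq_mult_self:
  fixes f :: "'a::{idom,ring_char_0} poly"
  assumes "pderiv f \<noteq> 0"
  shows "pderiv f \<noteq> h * f"
proof
  assume eq: "pderiv f = h * f"
  have d: "degree f \<noteq> 0" using assms pderiv_eq_0_iff by blast
  have "h \<noteq> 0" "f \<noteq> 0" using assms eq by auto
  then have "degree (h * f) = degree h + degree f" by (rule degree_mult_eq)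
  moreover have "degree (pderiv f) = degree f - 1" by (rule degree_pderiv)
  ultimately show False using eq d by simp
qed

lemma not_dvd_pd3:
  assumes "pd3 F \<noteq> 0"
  shows "\<not> F dvd pd3 F"
proof
  assume "F dvd pd3 F"
  then have "degree F \<le> degree (pderiv F)" using assms dvd_imp_degree_le unfolding pd3_def by blast
  moreover have "degree F \<noteq> 0" using assms pderiv_eq_0_iff unfolding pd3_def by blast
  moreover have "degree (pderiv F) = degree F - 1" by (rule degree_pderiv)
  ultimately show False by simp
qed

lemma not_dvd_pd2:
  assumes "pd2 F \<noteq> 0"
  shows "\<not> F dvd pd2 F"
proof
  assume "F dvd pd2 F"
  then obtain H where H: "map_poly pderiv F = F * H" unfolding pd2_def by (auto elim: dvdE)
  have "\<exists>h. (\<forall>l. pderiv (coeff F l) = h * coeff F l) \<and> (\<exists>l. pderiv (coeff F l) \<noteq> 0)"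
    by (rule map_poly_eq_mult_imp_scalar[OF H]) (use assms in \<open>simp_all add: pd2_def\<close>)
  then show False using pderiv_neq_mult_self by blast
qed

lemma not_dvd_pd1:
  assumes "pd1 F \<noteq> 0"
  shows "\<not> F dvd pd1 F"
proof
  assume "F dvd pd1 F"
  then obtain H where H: "map_poly (map_poly pderiv) F = F * H" unfolding pd1_def by (auto elim: dvdE)
  have "\<exists>h. (\<forall>l. map_poly pderiv (coeff F l) = h * coeff F l) \<and> (\<exists>l. map_poly pderiv (coeff F l) \<noteq> 0)"
    by (rule map_poly_eq_mult_imp_scalar[OF H]) (use assms in \<open>simp_all add: pd1_def\<close>)
  then obtain h l where h: "\<forall>l. map_poly pderiv (coeff F l) = h * coeff F l"
    and l: "map_poly pderiv (coeff F l) \<noteq> 0" by blast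
  have "map_poly pderiv (coeff F l) = coeff F l * h" using h by (simp add: mult.commute)
  then have "\<exists>h'. (\<forall>t. pderiv (coeff (coeff F l) t) = h' * coeff (coeff F l) t) \<and>
      (\<exists>t. pderiv (coeff (coeff F l) t) \<noteq> 0)"
    by (rule map_poly_eq_mult_imp_scalar) (use l in simp_all)
  then show False using pderiv_neq_mult_self by blast
qed

lemma irreducible_coeff_divisor_unit:
  fixes F :: "'a::{idom_divide,algebraic_semidom} poly"
  assumes "irreducible F" "degree F \<noteq> 0" "\<forall>l. d dvd coeff F l"
  shows "is_unit d"
proof -
  have "[:d:] dvd F" using assms(3) const_poly_dvd_iff by blast
  then obtain F' where F': "F = [:d:] * F'" by (auto elim: dvdE)
  then have "is_unit [:d:] \<or> is_unit F'" using assms(1) irreducibleD by blast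
  then show ?thesis
  proof
    assume "is_unit [:d:]" then show ?thesis by (simp add: is_unit_const_poly_iff)
  next
    assume "is_unit F'"
    then obtain c where "F' = [:c:]" by (auto elim: is_unit_polyE)
    then show ?thesis using F' assms(2) by simp
  qed
qed

lemma irreducible_coeff_coeff_nonroot:
  fixes F :: "'a::field poly poly poly"
  assumes "irreducible F" "degree F \<noteq> 0"
  shows "\<exists>l t. poly (coeff (coeff F l) t) a \<noteq> 0"
proof (rule ccontr)
  assume "\<not> ?thesis"
  then have "[:[:-a, 1:]:] dvd coeff F l" for l by (simp add: const_poly_dvd_iff poly_eq_0_iff_dvd)
  then have "is_unit [:[:-a, 1:]:]" using irreducible_coeff_divisor_unit[OF assms] by blast
  then show False by (auto simp: is_unit_const_poly_iff elim!: is_unit_polyE)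
qed

lemma irreducible_const_combination:
  fixes F G :: "'a :: {factorial_ring_gcd,semiring_gcd_mult_normalize} poly"
  assumes irr: "irreducible F" and G0: "G \<noteq> 0" and nd: "\<not> F dvd G"
  shows "\<exists>A B R. R \<noteq> 0 \<and> A * F + B * G = [:R:]"
proof -
  have FG: "F \<noteq> G" using nd by auto
  have cop: "\<forall>d. (\<forall>f\<in>{F,G}. d dvd f) \<longrightarrow> is_unit d"
  proof (intro allI impI)
    fix d assume "\<forall>f\<in>{F,G}. d dvd f"
    then have dF: "d dvd F" and dG: "d dvd G" by auto
    then obtain e where e: "F = d * e" by (auto elim: dvdE)
    then have "is_unit d \<or> is_unit e" using irr irreducibleD by blast
    moreover have "\<not> is_unit e"
    proof
      assume "is_unit e"
      then have "F dvd d" using e by (simp add: mult_unit_dvd_iff' dvd_mult_unit_iff)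
      then show False using nd dG dvd_trans by blast
    qed
    ultimately show "is_unit d" by blast
  qed
  obtain l R where lR: "R \<noteq> 0" "(\<Sum>f\<in>{F,G}. l f * f) = [:R:]"
    using coprime_set_const_combination[of "{F,G}"] cop G0 by auto
  then have "l F * F + l G * G = [:R:]" using FG by simp
  then show ?thesis using lR by blast
qed

definition eval2 :: "complex poly poly \<Rightarrow> complex \<Rightarrow> complex \<Rightarrow> complex" where
  "eval2 q x y = poly (poly q [:y:]) x"

lemma eval2_expand: "eval2 q x y = (\<Sum>k\<le>degree q. poly (coeff q k) x * y^k)"
proof -
  have "poly q [:y:] = (\<Sum>k\<le>degree q. coeff q k * [:y:]^k)" by (rule poly_altdef)
  then show ?thesis unfolding eval2_def by (simp add: poly_sum poly_power)
qed

lemma eval3_expand: "eval3 F x y z = (\<Sum>l\<le>degree F. eval2 (coeff F l) x y * z^l)"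
proof -
  have "poly F [:[:z:]:] = (\<Sum>l\<le>degree F. coeff F l * [:[:z:]:]^l)" by (rule poly_altdef)
  then show ?thesis unfolding eval3_def eval2_def by (simp add: poly_sum poly_power)
qed

lemma eval3_add: "eval3 (A + B) x y z = eval3 A x y z + eval3 B x y z"
  unfolding eval3_def by simp

lemma eval3_mult: "eval3 (A * B) x y z = eval3 A x y z * eval3 B x y z"
  unfolding eval3_def by simp

lemma eval3_const: "eval3 [:R:] x y z = eval2 R x y"
  unfolding eval3_def eval2_def by simp

lemma eval2_sum: "eval2 (\<Sum>f\<in>S. g f) x y = (\<Sum>f\<in>S. eval2 (g f) x y)"
  unfolding eval2_def by (simp add: poly_sum)

lemma eval2_mult: "eval2 (A * B) x y = eval2 A x y * eval2 B x y"
  unfolding eval2_def by simp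

lemma eval2_const: "eval2 [:r:] x y = poly r x"
  unfolding eval2_def by simp

type_synonym fn = "complex list \<Rightarrow> complex"

definition vanishes_on :: "complex list set \<Rightarrow> fn \<Rightarrow> bool" where
  "vanishes_on Z f \<longleftrightarrow> (\<forall>v\<in>Z. f v = 0)"

lemma poly_fun_sum: "(\<And>k. k \<in> K \<Longrightarrow> poly_fun n (f k)) \<Longrightarrow> poly_fun n (\<lambda>v. \<Sum>k\<in>K. f k v)"
proof (induction K rule: infinite_finite_induct)
  case (infinite K) then show ?case by (simp add: poly_fun.pf_const)
next
  case empty then show ?case by (simp add: poly_fun.pf_const)
next
  case (insert x F) then show ?case by (simp add: poly_fun.pf_add)
qed

lemma poly_fun_prod: "finite K \<Longrightarrow> (\<And>k. k \<in> K \<Longrightarrow> poly_fun n (f k)) \<Longrightarrow> poly_fun n (\<lambda>v. \<Prod>k\<in>K. f k v)"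
proof (induction K rule: finite_induct)
  case empty then show ?case by (simp add: poly_fun.pf_const)
next
  case (insert x F) then show ?case by (simp add: poly_fun.pf_mult)
qed

lemma poly_fun_pow: "poly_fun n f \<Longrightarrow> poly_fun n (\<lambda>v. f v ^ k)"
  by (induction k) (auto intro: poly_fun.intros)

lemma zariski_closed_length: "zariski_closed n Z \<Longrightarrow> v \<in> Z \<Longrightarrow> length v = n"
  unfolding zariski_closed_def by auto

lemma zariski_closed_zero_set: "poly_fun n f \<Longrightarrow> zariski_closed n {v. length v = n \<and> f v = 0}"
  unfolding zariski_closed_def by (rule exI[of _ "{f}"]) auto

lemma zariski_closed_psubset_separating:
  assumes "zariski_closed n Z" "zariski_closed n Z'" "Z \<subset> Z'"
  obtains p where "poly_fun n p" "vanishes_on Z p" "\<not> vanishes_on Z' p"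
proof -
  obtain P where P: "\<forall>p\<in>P. poly_fun n p" "Z = {v. length v = n \<and> (\<forall>p\<in>P. p v = 0)}"
    using assms(1) unfolding zariski_closed_def by blast
  obtain w where w: "w \<in> Z'" "w \<notin> Z" using assms(3) by blast
  have "length w = n" using zariski_closed_length[OF assms(2) w(1)] .
  then obtain p where "p \<in> P" "p w \<noteq> 0" using w(2) P(2) by blast
  then show ?thesis using that P w(1) unfolding vanishes_on_def by blast
qed

definition span_on :: "complex list set \<Rightarrow> fn set \<Rightarrow> fn \<Rightarrow> bool" where
  "span_on Z B f \<longleftrightarrow> (\<exists>c. \<forall>v\<in>Z. f v = (\<Sum>b\<in>B. c b * b v))"

lemma span_onI:
  assumes "finite B" "finite K" "\<forall>k\<in>K. \<psi> k \<in> B"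
    and "\<forall>v\<in>Z. f v = (\<Sum>k\<in>K. a k * \<psi> k v)"
  shows "span_on Z B f"
proof -
  define c where "c = (\<lambda>b. \<Sum>k\<in>{k\<in>K. \<psi> k = b}. a k)"
  have "f v = (\<Sum>b\<in>B. c b * b v)" if v: "v \<in> Z" for v
  proof -
    have "(\<Sum>b\<in>B. c b * b v) = (\<Sum>b\<in>B. \<Sum>k\<in>{k\<in>K. \<psi> k = b}. a k * \<psi> k v)"
      unfolding c_def by (auto simp: sum_distrib_right intro!: sum.cong)
    also have "\<dots> = (\<Sum>k\<in>K. a k * \<psi> k v)"
      using assms by (intro sum.group) auto
    finally show ?thesis using assms(4) v by simp
  qed
  then show ?thesis unfolding span_on_def by blast
qed

lemma span_on_elim:
  assumes "span_on Z B f"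
  obtains c where "\<forall>v\<in>Z. f v = (\<Sum>b\<in>B. c b * b v)"
  using assms unfolding span_on_def by blast

lemma span_on_elem: "finite B \<Longrightarrow> b \<in> B \<Longrightarrow> span_on Z B b"
  by (rule span_onI[of B "{()}" "\<lambda>_. b" Z b "\<lambda>_. 1"]) auto

lemma span_on_cong: "(\<And>v. v \<in> Z \<Longrightarrow> f v = g v) \<Longrightarrow> span_on Z B g \<Longrightarrow> span_on Z B f"
  unfolding span_on_def by auto

lemma span_on_image_mult:
  assumes "finite B" "span_on Z B f"
  shows "span_on Z ((\<lambda>b v. g v * b v) ` B) (\<lambda>v. g v * f v)"
proof -
  obtain c where c: "\<forall>v\<in>Z. f v = (\<Sum>b\<in>B. c b * b v)" using assms(2) by (rule span_on_elim)
  show ?thesis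
  proof (rule span_onI[of _ B "\<lambda>b v. g v * b v" _ _ c])
    show "\<forall>v\<in>Z. g v * f v = (\<Sum>k\<in>B. c k * (g v * k v))"
      using c by (simp add: sum_distrib_left mult_ac)
  qed (use assms in auto)
qed

lemma span_on_mono:
  assumes "finite B'" "B \<subseteq> B'" "span_on Z B f"
  shows "span_on Z B' f"
proof -
  obtain c where c: "\<forall>v\<in>Z. f v = (\<Sum>b\<in>B. c b * b v)" using assms(3) by (rule span_on_elim)
  have fB: "finite B" using assms(1,2) finite_subset by blast
  show ?thesis by (rule span_onI[of B' B id Z f c]) (use assms fB c in auto)
qed

lemma span_on_linear_combination:
  assumes "finite B" "finite K" "\<forall>k\<in>K. span_on Z B (h k)"
  shows "span_on Z B (\<lambda>v. \<Sum>k\<in>K. a k * h k v)"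
proof -
  have "\<forall>k\<in>K. \<exists>c. \<forall>v\<in>Z. h k v = (\<Sum>b\<in>B. c b * b v)" using assms(3) unfolding span_on_def by blast
  from bchoice[OF this] obtain C where C: "\<forall>k\<in>K. \<forall>v\<in>Z. h k v = (\<Sum>b\<in>B. C k b * b v)" by blast
  show ?thesis
  proof (rule span_onI[of B "K \<times> B" snd Z _ "\<lambda>kb. a (fst kb) * C (fst kb) (snd kb)"])
    show "\<forall>v\<in>Z. (\<Sum>k\<in>K. a k * h k v) = (\<Sum>kb\<in>K \<times> B. a (fst kb) * C (fst kb) (snd kb) * snd kb v)"
    proof
      fix v assume v: "v \<in> Z"
      have "(\<Sum>k\<in>K. a k * h k v) = (\<Sum>k\<in>K. \<Sum>b\<in>B. a k * C k b * b v)"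
        using C v by (auto simp: sum_distrib_left mult_ac intro!: sum.cong)
      also have "\<dots> = (\<Sum>kb\<in>K \<times> B. a (fst kb) * C (fst kb) (snd kb) * snd kb v)"
        by (simp add: sum.cartesian_product case_prod_beta)
      finally show "(\<Sum>k\<in>K. a k * h k v) = (\<Sum>kb\<in>K \<times> B. a (fst kb) * C (fst kb) (snd kb) * snd kb v)" .
    qed
  qed (use assms in auto)
qed

lemma homogeneous_system_nontrivial_solution:
  fixes M :: "'i \<Rightarrow> 'b \<Rightarrow> complex"
  assumes "finite B" "finite I" "card B < card I"
  shows "\<exists>l. (\<exists>i\<in>I. l i \<noteq> 0) \<and> (\<forall>b\<in>B. (\<Sum>i\<in>I. l i * M i b) = 0)"
  using assms
proof (induction B arbitrary: I M rule: finite_induct)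
  case empty
  then obtain i where "i \<in> I" by fastforce
  then show ?case by (intro exI[of _ "\<lambda>_. 1"]) auto
next
  case (insert b B)
  show ?case
  proof (cases "\<forall>i\<in>I. M i b = 0")
    case True
    have "card B < card I" using insert.prems insert.hyps by auto
    from insert.IH[OF insert.prems(1) this, of M] obtain l where
      "(\<exists>i\<in>I. l i \<noteq> 0)" "\<forall>b\<in>B. (\<Sum>i\<in>I. l i * M i b) = 0" by blast
    then show ?thesis using True by (intro exI[of _ l]) auto
  next
    case False
    then obtain i0 where i0: "i0 \<in> I" "M i0 b \<noteq> 0" by auto
    define I' where "I' = I - {i0}"
    define M' where "M' = (\<lambda>i c. M i c - (M i b / M i0 b) * M i0 c)"
    have fI': "finite I'" using insert.prems I'_def by auto
    have cI: "card I' = card I - 1" using i0 insert.prems I'_def by auto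
    have "card B < card I'" using insert.prems insert.hyps cI by auto
    from insert.IH[OF fI' this] obtain l where
      l: "\<exists>i\<in>I'. l i \<noteq> 0" "\<forall>c\<in>B. (\<Sum>i\<in>I'. l i * M' i c) = 0" by blast
    define l' where "l' = (\<lambda>i. if i = i0 then - (\<Sum>j\<in>I'. l j * M j b) / M i0 b else l i)"
    have split: "(\<Sum>i\<in>I. l' i * M i c) = l' i0 * M i0 c + (\<Sum>i\<in>I'. l i * M i c)" for c
    proof -
      have "(\<Sum>i\<in>I. l' i * M i c) = l' i0 * M i0 c + (\<Sum>i\<in>I'. l' i * M i c)"
        unfolding I'_def using sum.remove[OF insert.prems(1) i0(1)] .
      also have "(\<Sum>i\<in>I'. l' i * M i c) = (\<Sum>i\<in>I'. l i * M i c)"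
        by (rule sum.cong) (auto simp: l'_def I'_def)
      finally show ?thesis .
    qed
    have "\<forall>c\<in>insert b B. (\<Sum>i\<in>I. l' i * M i c) = 0"
    proof
      fix c assume c: "c \<in> insert b B"
      have eq: "(\<Sum>i\<in>I. l' i * M i c) = (\<Sum>i\<in>I'. l i * M' i c)"
      proof -
        have "(\<Sum>i\<in>I'. l i * M' i c) = (\<Sum>i\<in>I'. l i * M i c) - (\<Sum>i\<in>I'. l i * M i b) / M i0 b * M i0 c"
          unfolding M'_def by (simp add: algebra_simps sum_subtractf sum_distrib_left sum_divide_distrib sum_distrib_right)
        moreover have "l' i0 * M i0 c = - ((\<Sum>j\<in>I'. l j * M j b) / M i0 b * M i0 c)"
          by (simp add: l'_def)
        ultimately show ?thesis using split[of c] by simp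
      qed
      show "(\<Sum>i\<in>I. l' i * M i c) = 0"
      proof (cases "c = b")
        case True
        have "(\<Sum>i\<in>I'. l i * M' i b) = 0" unfolding M'_def using i0 by simp
        then show ?thesis using eq True by simp
      next
        case False then show ?thesis using eq l c by auto
      qed
    qed
    moreover have "\<exists>i\<in>I. l' i \<noteq> 0" using l(1) I'_def by (auto simp: l'_def)
    ultimately show ?thesis by blast
  qed
qed

lemma span_on_card_lt_dependent:
  assumes "finite S" "finite B" "card B < card S" "\<forall>\<beta>\<in>S. span_on Z B (f \<beta>)"
  obtains l where "\<exists>\<beta>\<in>S. l \<beta> \<noteq> 0" "\<forall>v\<in>Z. (\<Sum>\<beta>\<in>S. l \<beta> * f \<beta> v) = 0"
proof -
  from assms(4) obtain M where M: "\<forall>\<beta>\<in>S. \<forall>v\<in>Z. f \<beta> v = (\<Sum>b\<in>B. M \<beta> b * b v)"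
    unfolding span_on_def by metis
  obtain l where l: "\<exists>\<beta>\<in>S. l \<beta> \<noteq> 0" "\<forall>b\<in>B. (\<Sum>\<beta>\<in>S. l \<beta> * M \<beta> b) = 0"
    using homogeneous_system_nontrivial_solution[OF assms(2,1,3)] by blast
  have "(\<Sum>\<beta>\<in>S. l \<beta> * f \<beta> v) = 0" if "v \<in> Z" for v
  proof -
    have "(\<Sum>\<beta>\<in>S. l \<beta> * f \<beta> v) = (\<Sum>\<beta>\<in>S. l \<beta> * (\<Sum>b\<in>B. M \<beta> b * b v))"
      using M that by simp
    also have "\<dots> = (\<Sum>b\<in>B. (\<Sum>\<beta>\<in>S. l \<beta> * M \<beta> b) * b v)"
      by (simp add: sum_distrib_left sum_distrib_right sum.swap[of _ S] mult_ac)
    finally show ?thesis using l(2) by simp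
  qed
  then show ?thesis using that l(1) by blast
qed

definition times_powers :: "fn set \<Rightarrow> nat \<Rightarrow> nat \<Rightarrow> fn set" where
  "times_powers B u m = (\<lambda>(b, l) v. (v!u)^l * b v) ` (B \<times> {..<m})"

lemma finite_times_powers: "finite B \<Longrightarrow> finite (times_powers B u m)"
  unfolding times_powers_def by simp

lemma card_times_powers: "finite B \<Longrightarrow> card (times_powers B u m) \<le> card B * m"
proof -
  assume "finite B"
  then have "card (times_powers B u m) \<le> card (B \<times> {..<m})"
    unfolding times_powers_def by (intro card_image_le) simp
  then show ?thesis by (simp add: card_cartesian_product)
qed

definition monom_of :: "(nat \<Rightarrow> fn) \<Rightarrow> nat \<Rightarrow> (nat \<Rightarrow> nat) \<Rightarrow> fn" where
  "monom_of g r \<alpha> v = (\<Prod>i<r. g i v ^ \<alpha> i)"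

lemma monom_of_Suc: "monom_of g (Suc r) \<alpha> v = monom_of g r \<alpha> v * g r v ^ \<alpha> r"
  unfolding monom_of_def by simp

lemma monom_of_cong: "(\<And>i. i < r \<Longrightarrow> g i = g' i) \<Longrightarrow> monom_of g r \<alpha> = monom_of g' r \<alpha>"
  unfolding monom_of_def by (auto intro!: prod.cong)

lemma monom_of_cong_exp: "(\<And>i. i < r \<Longrightarrow> \<alpha> i = \<alpha>' i) \<Longrightarrow> monom_of g r \<alpha> = monom_of g r \<alpha>'"
  unfolding monom_of_def by (auto intro!: prod.cong)

lemma monom_of_upd_Suc: "monom_of (g(r:=p)) (Suc r) \<alpha> v = monom_of g r \<alpha> v * p v ^ \<alpha> r"
proof -
  have "monom_of (g(r:=p)) r \<alpha> = monom_of g r \<alpha>" by (rule monom_of_cong) simp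
  then show ?thesis by (simp add: monom_of_Suc)
qed

lemma poly_fun_monom_of: "(\<And>i. i < r \<Longrightarrow> poly_fun n (g i)) \<Longrightarrow> poly_fun n (monom_of g r \<alpha>)"
  unfolding monom_of_def by (rule poly_fun_prod) (auto intro: poly_fun_pow)

definition alg_indep_on :: "complex list set \<Rightarrow> nat \<Rightarrow> (nat \<Rightarrow> fn) \<Rightarrow> bool" where
  "alg_indep_on Z r g \<longleftrightarrow> (\<forall>S C. finite S \<longrightarrow> (\<forall>\<alpha>\<in>S. \<forall>i\<ge>r. \<alpha> i = 0) \<longrightarrow>
      (\<forall>v\<in>Z. (\<Sum>\<alpha>\<in>S. C \<alpha> * monom_of g r \<alpha> v) = 0) \<longrightarrow> (\<forall>\<alpha>\<in>S. C \<alpha> = 0))"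

lemma alg_indep_on_0:
  assumes "Z \<noteq> {}"
  shows "alg_indep_on Z 0 g"
  unfolding alg_indep_on_def
proof (intro allI impI ballI)
  fix S C \<alpha> assume fS: "finite S" and sup: "\<forall>\<alpha>\<in>S. \<forall>i\<ge>0. \<alpha> i = 0"
    and z: "\<forall>v\<in>Z. (\<Sum>\<alpha>\<in>S. C \<alpha> * monom_of g 0 \<alpha> v) = 0" and a: "\<alpha> \<in> S"
  have a0: "\<alpha> = (\<lambda>_. 0)" using sup a by auto
  have "S = {\<alpha>}" using sup a0 a by fastforce
  obtain v where "v \<in> Z" using assms by blast
  then have "(\<Sum>\<alpha>\<in>S. C \<alpha> * monom_of g 0 \<alpha> v) = 0" using z by blast
  then have "C \<alpha> * monom_of g 0 \<alpha> v = 0" using \<open>S = {\<alpha>}\<close> by simp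
  then show "C \<alpha> = 0" by (simp add: monom_of_def)
qed

lemma alg_indep_on_extend_degree0_coeffs:
  assumes sub: "Z \<subseteq> Z'" and ind: "alg_indep_on Z r g" and vp: "vanishes_on Z p"
    and fS: "finite S" and sup: "\<forall>\<alpha>\<in>S. \<forall>i\<ge>Suc r. \<alpha> i = 0"
    and z: "\<forall>v\<in>Z'. (\<Sum>\<alpha>\<in>S. C \<alpha> * monom_of (g(r:=p)) (Suc r) \<alpha> v) = 0"
    and \<alpha>: "\<alpha> \<in> S" "\<alpha> r = 0"
  shows "C \<alpha> = 0"
proof -
  define S0 where "S0 = {\<alpha>\<in>S. \<alpha> r = 0}"
  have sup0: "\<forall>\<alpha>\<in>S0. \<forall>i\<ge>r. \<alpha> i = 0"
    using sup unfolding S0_def by (metis (mono_tags, lifting) le_eq_less_or_eq Suc_le_eq mem_Collect_eq)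
  have "(\<Sum>\<alpha>\<in>S0. C \<alpha> * monom_of g r \<alpha> v) = 0" if v: "v \<in> Z" for v
  proof -
    have pv: "p v = 0" using vp v unfolding vanishes_on_def by auto
    have "(\<Sum>\<alpha>\<in>S. C \<alpha> * monom_of (g(r:=p)) (Suc r) \<alpha> v) =
          (\<Sum>\<alpha>\<in>S0. C \<alpha> * monom_of (g(r:=p)) (Suc r) \<alpha> v)"
    proof (rule sum.mono_neutral_right[OF fS])
      show "S0 \<subseteq> S" unfolding S0_def by blast
      show "\<forall>\<alpha>\<in>S - S0. C \<alpha> * monom_of (g(r:=p)) (Suc r) \<alpha> v = 0"
        unfolding S0_def by (simp add: monom_of_upd_Suc pv)
    qed
    also have "\<dots> = (\<Sum>\<alpha>\<in>S0. C \<alpha> * monom_of g r \<alpha> v)"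
      by (rule sum.cong[OF refl]) (simp add: S0_def monom_of_upd_Suc)
    finally show ?thesis using z v sub by auto
  qed
  moreover have "finite S0" using fS unfolding S0_def by simp
  ultimately have "\<forall>\<alpha>\<in>S0. C \<alpha> = 0" using ind sup0 unfolding alg_indep_on_def by blast
  then show ?thesis using \<alpha> unfolding S0_def by blast
qed

lemma monom_of_upd_sum_factor:
  assumes fS: "finite S" and S: "\<forall>\<alpha>\<in>S. \<alpha> r \<noteq> 0"
  shows "(\<Sum>\<alpha>\<in>S. C \<alpha> * monom_of (g(r:=p)) (Suc r) \<alpha> v) =
         p v * (\<Sum>\<beta>\<in>(\<lambda>\<alpha>. \<alpha>(r := \<alpha> r - 1)) ` S. C (\<beta>(r := Suc (\<beta> r))) * monom_of (g(r:=p)) (Suc r) \<beta> v)"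
proof -
  define dn where "dn = (\<lambda>\<alpha>::nat\<Rightarrow>nat. \<alpha>(r := \<alpha> r - 1))"
  define up where "up = (\<lambda>\<beta>::nat\<Rightarrow>nat. \<beta>(r := Suc (\<beta> r)))"
  have updn: "up (dn \<alpha>) = \<alpha>" if "\<alpha> \<in> S" for \<alpha>
    using that S unfolding up_def dn_def by (auto simp: fun_eq_iff)
  have inj: "inj_on dn S" by (metis inj_on_inverseI updn)
  have gup: "monom_of (g(r:=p)) (Suc r) (up \<beta>) v = monom_of (g(r:=p)) (Suc r) \<beta> v * p v" for \<beta>
  proof -
    have "monom_of g r (up \<beta>) = monom_of g r \<beta>" by (rule monom_of_cong_exp) (simp add: up_def)
    then show ?thesis by (simp add: monom_of_upd_Suc up_def mult_ac)
  qed
  have "(\<Sum>\<alpha>\<in>S. C \<alpha> * monom_of (g(r:=p)) (Suc r) \<alpha> v) =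
        (\<Sum>\<alpha>\<in>S. C (up (dn \<alpha>)) * monom_of (g(r:=p)) (Suc r) (up (dn \<alpha>)) v)"
    using updn by (intro sum.cong) simp_all
  also have "\<dots> = (\<Sum>\<beta>\<in>dn ` S. C (up \<beta>) * monom_of (g(r:=p)) (Suc r) (up \<beta>) v)"
    by (rule sum.reindex[OF inj, symmetric, unfolded comp_def])
  finally show ?thesis by (simp add: dn_def up_def gup[unfolded up_def] sum_distrib_left mult_ac)
qed

context
  fixes n :: nat
begin

definition monom_fun :: "(nat \<Rightarrow> nat) \<Rightarrow> fn" where
  "monom_fun \<alpha> v = (\<Prod>i<n. (v!i) ^ (\<alpha> i))"

definition exp_box :: "nat set \<Rightarrow> nat \<Rightarrow> (nat \<Rightarrow> nat) set" where
  "exp_box T D = {\<alpha>. (\<forall>i\<in>T. \<alpha> i \<le> D) \<and> (\<forall>i. i \<notin> T \<longrightarrow> \<alpha> i = 0)}"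

definition poly_in :: "nat set \<Rightarrow> nat \<Rightarrow> fn \<Rightarrow> bool" where
  "poly_in T D f \<longleftrightarrow> (\<exists>c. \<forall>v. f v = (\<Sum>\<alpha>\<in>exp_box T D. c \<alpha> * monom_fun \<alpha> v))"

lemma bij_exp_box: "bij_betw (\<lambda>\<alpha>. restrict \<alpha> T) (exp_box T D) (PiE T (\<lambda>_. {..D}))"
proof (rule bij_betwI')
  fix a b assume "a \<in> exp_box T D" "b \<in> exp_box T D"
  then have z: "\<forall>i. i \<notin> T \<longrightarrow> a i = 0 \<and> b i = 0" unfolding exp_box_def by blast
  show "(restrict a T = restrict b T) = (a = b)"
  proof
    assume r: "restrict a T = restrict b T"
    show "a = b"
    proof
      fix i show "a i = b i"
      proof (cases "i \<in> T")
        case True then show ?thesis using fun_cong[OF r, of i] by simp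
      next
        case False then show ?thesis using z by simp
      qed
    qed
  qed simp
next
  fix a assume "a \<in> exp_box T D" then show "restrict a T \<in> PiE T (\<lambda>_. {..D})"
    unfolding exp_box_def by auto
next
  fix f assume f: "f \<in> PiE T (\<lambda>_. {..D})"
  define a where "a = (\<lambda>i. if i \<in> T then f i else 0)"
  have "a \<in> exp_box T D" using f unfolding a_def exp_box_def by auto
  moreover have "f = restrict a T" using f unfolding a_def by (auto simp: restrict_def PiE_def extensional_def fun_eq_iff)
  ultimately show "\<exists>a\<in>exp_box T D. f = restrict a T" by blast
qed

lemma finite_exp_box: "finite T \<Longrightarrow> finite (exp_box T D)"
  using bij_betw_finite[OF bij_exp_box] by (simp add: finite_PiE)

lemma card_exp_box: "finite T \<Longrightarrow> card (exp_box T D) = (D+1) ^ card T"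
  using bij_betw_same_card[OF bij_exp_box[of T D]] by (simp add: card_PiE)

lemma exp_box_mono: "T \<subseteq> T' \<Longrightarrow> D \<le> D' \<Longrightarrow> exp_box T D \<subseteq> exp_box T' D'"
  unfolding exp_box_def by (auto intro: order_trans)

lemma poly_inI:
  assumes "finite T" "finite K" "\<forall>k\<in>K. \<phi> k \<in> exp_box T D"
    and "\<forall>v. f v = (\<Sum>k\<in>K. a k * monom_fun (\<phi> k) v)"
  shows "poly_in T D f"
proof -
  define c where "c = (\<lambda>\<alpha>. \<Sum>k\<in>{k\<in>K. \<phi> k = \<alpha>}. a k)"
  have "f v = (\<Sum>\<alpha>\<in>exp_box T D. c \<alpha> * monom_fun \<alpha> v)" for v
  proof -
    have "(\<Sum>\<alpha>\<in>exp_box T D. c \<alpha> * monom_fun \<alpha> v) = (\<Sum>\<alpha>\<in>exp_box T D. \<Sum>k\<in>{k\<in>K. \<phi> k = \<alpha>}. a k * monom_fun (\<phi> k) v)"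
      unfolding c_def by (auto simp: sum_distrib_right intro!: sum.cong)
    also have "\<dots> = (\<Sum>k\<in>K. a k * monom_fun (\<phi> k) v)"
      using assms by (intro sum.group) (auto simp: finite_exp_box)
    finally show ?thesis using assms(4) by simp
  qed
  then show ?thesis unfolding poly_in_def by blast
qed

lemma poly_in_elim:
  assumes "poly_in T D f"
  obtains c where "\<forall>v. f v = (\<Sum>\<alpha>\<in>exp_box T D. c \<alpha> * monom_fun \<alpha> v)"
  using assms unfolding poly_in_def by blast

lemma poly_in_mono:
  assumes "poly_in T D f" "T \<subseteq> T'" "D \<le> D'" "finite T'"
  shows "poly_in T' D' f"
proof -
  obtain c where c: "\<forall>v. f v = (\<Sum>\<alpha>\<in>exp_box T D. c \<alpha> * monom_fun \<alpha> v)" using assms(1) by (rule poly_in_elim)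
  have "finite T" using assms finite_subset by blast
  show ?thesis
  proof (rule poly_inI[of T' "exp_box T D" id D' f c])
    show "finite (exp_box T D)" using \<open>finite T\<close> by (rule finite_exp_box)
    have "exp_box T D \<subseteq> exp_box T' D'" using assms(2,3) by (rule exp_box_mono)
    then show "\<forall>k\<in>exp_box T D. id k \<in> exp_box T' D'" by auto
    show "\<forall>v. f v = (\<Sum>k\<in>exp_box T D. c k * monom_fun (id k) v)" using c by simp
  qed (rule assms(4))
qed

lemma monom_fun_add: "monom_fun (\<lambda>i. a i + b i) v = monom_fun a v * monom_fun b v"
  by (simp add: monom_fun_def power_add prod.distrib)

lemma monom_fun_split:
  assumes "u < n"
  shows "monom_fun \<alpha> v = monom_fun (\<alpha>(u:=0)) v * (v!u)^(\<alpha> u)"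
proof -
  have "monom_fun \<alpha> v = (v!u)^(\<alpha> u) * (\<Prod>i\<in>{..<n}-{u}. (v!i)^(\<alpha> i))"
    unfolding monom_fun_def using assms by (simp add: prod.remove)
  moreover have "monom_fun (\<alpha>(u:=0)) v = (\<Prod>i\<in>{..<n}-{u}. (v!i)^(\<alpha> i))"
  proof -
    have "monom_fun (\<alpha>(u:=0)) v = (v!u)^((\<alpha>(u:=0)) u) * (\<Prod>i\<in>{..<n}-{u}. (v!i)^((\<alpha>(u:=0)) i))"
      unfolding monom_fun_def by (rule prod.remove) (use assms in auto)
    also have "(\<Prod>i\<in>{..<n}-{u}. (v!i)^((\<alpha>(u:=0)) i)) = (\<Prod>i\<in>{..<n}-{u}. (v!i)^(\<alpha> i))"
      by (rule prod.cong) auto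
    finally show ?thesis by (simp only: fun_upd_same power_0 mult_1_left)
  qed
  ultimately show ?thesis by (simp add: mult.commute)
qed

lemma zero_in_exp_box: "(\<lambda>_. 0) \<in> exp_box T D"
  by (simp add: exp_box_def)

lemma add_in_exp_box: "a \<in> exp_box T D1 \<Longrightarrow> b \<in> exp_box T D2 \<Longrightarrow> (\<lambda>i. a i + b i) \<in> exp_box T (D1+D2)"
  unfolding exp_box_def by (auto intro: add_mono)

lemma poly_in_const: "finite T \<Longrightarrow> poly_in T D (\<lambda>v. c)"
  by (rule poly_inI[of T "{()}" "\<lambda>_. \<lambda>_. 0" D _ "\<lambda>_. c"]) (auto simp: zero_in_exp_box monom_fun_def)

lemma poly_in_monom_fun: "finite T \<Longrightarrow> \<alpha> \<in> exp_box T D \<Longrightarrow> poly_in T D (monom_fun \<alpha>)"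
  by (rule poly_inI[of T "{()}" "\<lambda>_. \<alpha>" D _ "\<lambda>_. 1"]) auto

lemma poly_in_add:
  assumes "poly_in T D f" "poly_in T D g"
  shows "poly_in T D (\<lambda>v. f v + g v)"
proof -
  obtain c where c: "\<forall>v. f v = (\<Sum>\<alpha>\<in>exp_box T D. c \<alpha> * monom_fun \<alpha> v)" using assms(1) by (rule poly_in_elim)
  obtain d where d: "\<forall>v. g v = (\<Sum>\<alpha>\<in>exp_box T D. d \<alpha> * monom_fun \<alpha> v)" using assms(2) by (rule poly_in_elim)
  have e: "\<forall>v. f v + g v = (\<Sum>\<alpha>\<in>exp_box T D. (c \<alpha> + d \<alpha>) * monom_fun \<alpha> v)"
    using c d by (simp add: distrib_right sum.distrib)
  show ?thesis unfolding poly_in_def by (rule exI[of _ "\<lambda>\<alpha>. c \<alpha> + d \<alpha>"]) (rule e)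
qed

lemma poly_in_scale:
  assumes "poly_in T D f"
  shows "poly_in T D (\<lambda>v. k * f v)"
proof -
  obtain c where c: "\<forall>v. f v = (\<Sum>\<alpha>\<in>exp_box T D. c \<alpha> * monom_fun \<alpha> v)" using assms(1) by (rule poly_in_elim)
  have e: "\<forall>v. k * f v = (\<Sum>\<alpha>\<in>exp_box T D. (k * c \<alpha>) * monom_fun \<alpha> v)"
    using c by (simp add: sum_distrib_left mult.assoc)
  show ?thesis unfolding poly_in_def by (rule exI[of _ "\<lambda>\<alpha>. k * c \<alpha>"]) (rule e)
qed

lemma poly_in_sum:
  assumes "finite T" "\<And>k. k \<in> K \<Longrightarrow> poly_in T D (f k)"
  shows "poly_in T D (\<lambda>v. \<Sum>k\<in>K. f k v)"
  using assms(2)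
proof (induction K rule: infinite_finite_induct)
  case (infinite K) then show ?case using poly_in_const[OF assms(1)] by simp
next
  case empty then show ?case using poly_in_const[OF assms(1)] by simp
next
  case (insert x F) then show ?case by (simp add: poly_in_add)
qed

lemma poly_in_mult:
  assumes "finite T" "poly_in T D1 f" "poly_in T D2 g"
  shows "poly_in T (D1+D2) (\<lambda>v. f v * g v)"
proof -
  obtain c where c: "\<forall>v. f v = (\<Sum>\<alpha>\<in>exp_box T D1. c \<alpha> * monom_fun \<alpha> v)" using assms(2) by (rule poly_in_elim)
  obtain d where d: "\<forall>v. g v = (\<Sum>\<alpha>\<in>exp_box T D2. d \<alpha> * monom_fun \<alpha> v)" using assms(3) by (rule poly_in_elim)
  have "\<forall>v. f v * g v = (\<Sum>k\<in>exp_box T D1 \<times> exp_box T D2. (c (fst k) * d (snd k)) * monom_fun (\<lambda>i. fst k i + snd k i) v)"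
  proof
    fix v
    have "f v * g v = (\<Sum>\<alpha>\<in>exp_box T D1. \<Sum>\<beta>\<in>exp_box T D2. (c \<alpha> * monom_fun \<alpha> v) * (d \<beta> * monom_fun \<beta> v))"
      using c d by (simp add: sum_product)
    also have "\<dots> = (\<Sum>k\<in>exp_box T D1 \<times> exp_box T D2. (c (fst k) * monom_fun (fst k) v) * (d (snd k) * monom_fun (snd k) v))"
      by (simp add: sum.cartesian_product case_prod_beta)
    also have "\<dots> = (\<Sum>k\<in>exp_box T D1 \<times> exp_box T D2. (c (fst k) * d (snd k)) * monom_fun (\<lambda>i. fst k i + snd k i) v)"
      by (rule sum.cong[OF refl]) (simp add: monom_fun_add mult_ac)
    finally show "f v * g v = (\<Sum>k\<in>exp_box T D1 \<times> exp_box T D2. (c (fst k) * d (snd k)) * monom_fun (\<lambda>i. fst k i + snd k i) v)" .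
  qed
  then show ?thesis
    by (intro poly_inI[OF assms(1), of "exp_box T D1 \<times> exp_box T D2"]) (auto simp: finite_exp_box assms add_in_exp_box)
qed

lemma poly_in_pow:
  assumes "finite T" "poly_in T D f"
  shows "poly_in T (m*D) (\<lambda>v. f v ^ m)"
proof (induction m)
  case 0 then show ?case using poly_in_const[OF assms(1)] by simp
next
  case (Suc m)
  have "poly_in T (D + m*D) (\<lambda>v. f v * f v ^ m)" by (rule poly_in_mult[OF assms Suc])
  then show ?case by simp
qed

lemma poly_in_prod:
  assumes "finite T" "finite K" "\<And>k. k \<in> K \<Longrightarrow> poly_in T (D k) (f k)"
  shows "poly_in T (\<Sum>k\<in>K. D k) (\<lambda>v. \<Prod>k\<in>K. f k v)"
  using assms(2,3)
proof (induction K rule: finite_induct)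
  case empty then show ?case using poly_in_const[OF assms(1)] by simp
next
  case (insert x F)
  have "poly_in T (D x + (\<Sum>k\<in>F. D k)) (\<lambda>v. f x v * (\<Prod>k\<in>F. f k v))"
    by (rule poly_in_mult[OF assms(1)]) (use insert in auto)
  then show ?case using insert by simp
qed

lemma poly_in_var:
  assumes "finite T" "i \<in> T" "i < n"
  shows "poly_in T 1 (\<lambda>v. v!i)"
proof -
  define a where "a = (\<lambda>j. if j = i then 1 else (0::nat))"
  have "a \<in> exp_box T 1" using assms unfolding a_def exp_box_def by auto
  moreover have "monom_fun a v = v!i" for v
  proof -
    have "monom_fun a v = (\<Prod>j<n. if j = i then v!i else 1)"
      unfolding monom_fun_def a_def by (rule prod.cong) auto
    also have "\<dots> = v!i" using assms(3) by (simp add: prod.delta)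
    finally show ?thesis .
  qed
  ultimately have "poly_in T 1 (monom_fun a)" "monom_fun a = (\<lambda>v. v!i)" using poly_in_monom_fun[OF assms(1)] by auto
  then show ?thesis by simp
qed

lemma poly_in_poly:
  assumes "finite T" "i \<in> T" "i < n"
  shows "poly_in T (degree p) (\<lambda>v. poly p (v!i))"
proof -
  have "poly_in T (degree p) (\<lambda>v. \<Sum>k\<le>degree p. coeff p k * (v!i)^k)"
  proof (rule poly_in_sum[OF assms(1)])
    fix k assume k: "k \<in> {..degree p}"
    have "poly_in T (k*1) (\<lambda>v. (v!i)^k)" by (rule poly_in_pow[OF assms(1) poly_in_var[OF assms]])
    then have "poly_in T (degree p) (\<lambda>v. (v!i)^k)" using k by (auto intro: poly_in_mono[OF _ order_refl _ assms(1)])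
    then show "poly_in T (degree p) (\<lambda>v. coeff p k * (v!i)^k)" by (rule poly_in_scale)
  qed
  then show ?thesis by (simp add: poly_altdef)
qed

lemma poly_fun_monom_fun: "poly_fun n (monom_fun \<alpha>)"
  unfolding monom_fun_def by (rule poly_fun_prod) (auto intro!: poly_fun_pow poly_fun.pf_var)

lemma poly_in_poly_fun: "poly_in T D f \<Longrightarrow> poly_fun n f"
proof -
  assume "poly_in T D f"
  then obtain c where c: "\<forall>v. f v = (\<Sum>\<alpha>\<in>exp_box T D. c \<alpha> * monom_fun \<alpha> v)" by (rule poly_in_elim)
  have "poly_fun n (\<lambda>v. \<Sum>\<alpha>\<in>exp_box T D. c \<alpha> * monom_fun \<alpha> v)"
    by (rule poly_fun_sum) (auto intro!: poly_fun.pf_mult poly_fun.pf_const poly_fun_monom_fun)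
  moreover have "f = (\<lambda>v. \<Sum>\<alpha>\<in>exp_box T D. c \<alpha> * monom_fun \<alpha> v)" using c by auto
  ultimately show ?thesis by simp
qed

lemma poly_fun_poly_in: "poly_fun n f \<Longrightarrow> \<exists>D. poly_in {..<n} D f"
proof (induction rule: poly_fun.induct)
  case (pf_const c) then show ?case using poly_in_const by blast
next
  case (pf_var i) then show ?case using poly_in_var[of "{..<n}" i] by auto
next
  case (pf_add p q)
  then obtain D1 D2 where "poly_in {..<n} D1 p" "poly_in {..<n} D2 q" by blast
  then have "poly_in {..<n} (max D1 D2) p" "poly_in {..<n} (max D1 D2) q" by (auto elim: poly_in_mono)
  then show ?case using poly_in_add by blast
next
  case (pf_mult p q)
  then obtain D1 D2 where "poly_in {..<n} D1 p" "poly_in {..<n} D2 q" by blast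
  then show ?case using poly_in_mult[of "{..<n}"] by blast
qed

lemma poly_in_uniform_degree:
  assumes "finite T" "finite I" "\<forall>i\<in>I. \<exists>D. poly_in T D (g i)"
  shows "\<exists>e. \<forall>i\<in>I. poly_in T e (g i)"
proof -
  from bchoice[OF assms(3)] obtain Dg where Dg: "\<forall>i\<in>I. poly_in T (Dg i) (g i)" by blast
  have "poly_in T (\<Sum>j\<in>I. Dg j) (g i)" if "i \<in> I" for i
    using Dg that poly_in_mono[OF _ order_refl member_le_sum[OF _ _ assms(2)] assms(1)] by blast
  then show ?thesis by blast
qed

lemma poly_in_monom_of:
  assumes "finite T" "\<forall>i<r. poly_in T e (g i)" "\<beta> \<in> exp_box {..<r} D"
  shows "poly_in T (r*D*e) (monom_of g r \<beta>)"
proof -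
  have "poly_in T (\<Sum>i<r. \<beta> i * e) (\<lambda>v. \<Prod>i<r. g i v ^ \<beta> i)"
    by (rule poly_in_prod) (use assms in \<open>auto intro!: poly_in_pow\<close>)
  moreover have "(\<Sum>i<r. \<beta> i * e) \<le> (\<Sum>i<r. D * e)"
    by (rule sum_mono) (use assms(3) in \<open>auto simp: exp_box_def\<close>)
  ultimately show ?thesis unfolding monom_of_def
    by (elim poly_in_mono) (auto simp: mult_ac assms(1))
qed

definition poly_in_vars :: "nat set \<Rightarrow> fn \<Rightarrow> bool" where
  "poly_in_vars T f \<longleftrightarrow> (\<exists>E. poly_in T E f)"

lemma poly_in_vars_const: "finite T \<Longrightarrow> poly_in_vars T (\<lambda>v. c)"
  unfolding poly_in_vars_def using poly_in_const by blast

lemma poly_in_vars_mult: "finite T \<Longrightarrow> poly_in_vars T f \<Longrightarrow> poly_in_vars T g \<Longrightarrow> poly_in_vars T (\<lambda>v. f v * g v)"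
  unfolding poly_in_vars_def using poly_in_mult by blast

lemma poly_in_vars_add: "finite T \<Longrightarrow> poly_in_vars T f \<Longrightarrow> poly_in_vars T g \<Longrightarrow> poly_in_vars T (\<lambda>v. f v + g v)"
  unfolding poly_in_vars_def
proof -
  assume fT: "finite T" and "\<exists>E. poly_in T E f" "\<exists>E. poly_in T E g"
  then obtain E1 E2 where "poly_in T E1 f" "poly_in T E2 g" by blast
  then have "poly_in T (max E1 E2) f" "poly_in T (max E1 E2) g" using poly_in_mono[OF _ order_refl _ fT] by auto
  then show "\<exists>E. poly_in T E (\<lambda>v. f v + g v)" using poly_in_add by blast
qed

lemma poly_in_vars_pow: "finite T \<Longrightarrow> poly_in_vars T f \<Longrightarrow> poly_in_vars T (\<lambda>v. f v ^ m)"
  unfolding poly_in_vars_def using poly_in_pow by blast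

lemma poly_in_vars_sum: "finite T \<Longrightarrow> (\<And>k. k \<in> K \<Longrightarrow> poly_in_vars T (f k)) \<Longrightarrow> poly_in_vars T (\<lambda>v. \<Sum>k\<in>K. f k v)"
proof (induction K rule: infinite_finite_induct)
  case (infinite K) then show ?case using poly_in_vars_const by simp
next
  case empty then show ?case using poly_in_vars_const by simp
next
  case (insert x F) then show ?case by (simp add: poly_in_vars_add)
qed

lemma poly_in_vars_poly: "finite T \<Longrightarrow> i \<in> T \<Longrightarrow> i < n \<Longrightarrow> poly_in_vars T (\<lambda>v. poly p (v!i))"
  unfolding poly_in_vars_def using poly_in_poly by blast

lemma poly_in_vars_var: "finite T \<Longrightarrow> i \<in> T \<Longrightarrow> i < n \<Longrightarrow> poly_in_vars T (\<lambda>v. v!i)"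
  unfolding poly_in_vars_def using poly_in_var by blast

lemma poly_in_vars_poly_fun: "poly_in_vars T f \<Longrightarrow> poly_fun n f"
  unfolding poly_in_vars_def using poly_in_poly_fun by blast

lemma poly_in_vars_eval2:
  assumes "finite T" "i \<in> T" "j \<in> T" "i < n" "j < n"
  shows "poly_in_vars T (\<lambda>v. eval2 q (v!i) (v!j))"
  unfolding eval2_expand
  by (intro poly_in_vars_sum poly_in_vars_mult poly_in_vars_poly poly_in_vars_pow poly_in_vars_var assms)

lemma poly_in_vars_eval3:
  assumes "finite T" "i \<in> T" "j \<in> T" "k \<in> T" "i < n" "j < n" "k < n"
  shows "poly_in_vars T (\<lambda>v. eval3 F (v!i) (v!j) (v!k))"
  unfolding eval3_expand
  by (intro poly_in_vars_sum poly_in_vars_mult poly_in_vars_eval2 poly_in_vars_pow poly_in_vars_var assms)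

definition vanishing_ideal_prime :: "complex list set \<Rightarrow> bool" where
  "vanishing_ideal_prime Z \<longleftrightarrow> Z \<noteq> {} \<and> (\<forall>f g. poly_fun n f \<longrightarrow> poly_fun n g \<longrightarrow> vanishes_on Z (\<lambda>v. f v * g v) \<longrightarrow> vanishes_on Z f \<or> vanishes_on Z g)"

lemma zariski_irreducible_vanishing_ideal_prime:
  assumes "zariski_irreducible n Z"
  shows "vanishing_ideal_prime Z"
proof -
  have cl: "zariski_closed n Z" and ne: "Z \<noteq> {}" using assms unfolding zariski_irreducible_def by auto
  have "vanishes_on Z f \<or> vanishes_on Z g" if f: "poly_fun n f" and g: "poly_fun n g" and fg: "vanishes_on Z (\<lambda>v. f v * g v)" for f g
  proof -
    let ?A = "{v. length v = n \<and> f v = 0}" and ?B = "{v. length v = n \<and> g v = 0}"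
    have "Z \<subseteq> ?A \<union> ?B" using fg zariski_closed_length[OF cl] unfolding vanishes_on_def by auto
    then have "Z \<subseteq> ?A \<or> Z \<subseteq> ?B"
      using assms zariski_closed_zero_set[OF f] zariski_closed_zero_set[OF g] unfolding zariski_irreducible_def by blast
    then show ?thesis unfolding vanishes_on_def by auto
  qed
  then show ?thesis using ne unfolding vanishing_ideal_prime_def by blast
qed

lemma vanishing_ideal_prime_mult:
  "vanishing_ideal_prime Z \<Longrightarrow> poly_fun n f \<Longrightarrow> poly_fun n g \<Longrightarrow> \<not> vanishes_on Z f \<Longrightarrow> \<not> vanishes_on Z g \<Longrightarrow> \<not> vanishes_on Z (\<lambda>v. f v * g v)"
  unfolding vanishing_ideal_prime_def by blast

lemma vanishing_ideal_prime_power: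
  assumes "vanishing_ideal_prime Z" "poly_fun n f" "\<not> vanishes_on Z f"
  shows "\<not> vanishes_on Z (\<lambda>v. f v ^ m)"
proof (induction m)
  case 0 then show ?case using assms(1) unfolding vanishing_ideal_prime_def vanishes_on_def by auto
next
  case (Suc m)
  have "\<not> vanishes_on Z (\<lambda>v. f v * f v ^ m)"
    by (rule vanishing_ideal_prime_mult[OF assms(1,2) poly_fun_pow[OF assms(2)] assms(3) Suc])
  then show ?case by simp
qed

section \<open>Algebraic coordinates and growth of the Hilbert function\<close>

definition algebraic_over :: "complex list set \<Rightarrow> nat set \<Rightarrow> nat \<Rightarrow> bool" where
  "algebraic_over Z T u \<longleftrightarrow> (\<exists>m e c. (\<forall>l\<le>m. poly_in T e (c l)) \<and> \<not> vanishes_on Z (c m) \<and>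
      (\<forall>v\<in>Z. (\<Sum>l\<le>m. c l v * (v!u)^l) = 0))"

lemma algebraic_over_poly_inI:
  assumes "\<forall>l\<le>m. poly_in T e (c l)" "\<exists>l\<le>m. \<not> vanishes_on Z (c l)"
    and "\<forall>v\<in>Z. (\<Sum>l\<le>m. c l v * (v!u)^l) = 0"
  shows "algebraic_over Z T u"
proof -
  define P where "P = (\<lambda>l. l \<le> m \<and> \<not> vanishes_on Z (c l))"
  define m' where "m' = (GREATEST l. P l)"
  have ex: "\<exists>l. P l" using assms(2) P_def by blast
  have bnd: "\<forall>l. P l \<longrightarrow> l \<le> m" using P_def by blast
  have Pm': "P m'" unfolding m'_def using GreatestI_ex_nat[OF ex] bnd by blast
  have gr: "\<And>l. P l \<Longrightarrow> l \<le> m'" unfolding m'_def using Greatest_le_nat bnd by blast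
  have "(\<Sum>l\<le>m'. c l v * (v!u)^l) = 0" if v: "v \<in> Z" for v
  proof -
    have "(\<Sum>l\<le>m. c l v * (v!u)^l) = (\<Sum>l\<le>m'. c l v * (v!u)^l)"
    proof (rule sum.mono_neutral_right)
      show "{..m'} \<subseteq> {..m}" using Pm' P_def by auto
      show "\<forall>i\<in>{..m} - {..m'}. c i v * (v!u)^i = 0"
      proof
        fix i assume i: "i \<in> {..m} - {..m'}"
        then have "\<not> P i" using gr by force
        then have "vanishes_on Z (c i)" using i P_def by auto
        then show "c i v * (v!u)^i = 0" using v vanishes_on_def by auto
      qed
    qed auto
    then show ?thesis using assms(3) v by simp
  qed
  moreover have "\<forall>l\<le>m'. poly_in T e (c l)" using assms(1) Pm' P_def by auto
  moreover have "\<not> vanishes_on Z (c m')" using Pm' P_def by auto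
  ultimately show ?thesis unfolding algebraic_over_def by blast
qed

lemma algebraic_overI:
  assumes "finite T" "\<forall>l\<le>m. poly_in_vars T (c l)" "\<exists>l\<le>m. \<not> vanishes_on Z (c l)"
    and "\<forall>v\<in>Z. (\<Sum>l\<le>m. c l v * (v!u)^l) = 0"
  shows "algebraic_over Z T u"
proof -
  obtain e where "\<forall>l\<in>{..m}. poly_in T e (c l)"
    using poly_in_uniform_degree[OF assms(1) finite_atMost] assms(2) unfolding poly_in_vars_def by blast
  then show ?thesis using algebraic_over_poly_inI assms(3,4) by blast
qed

lemma algebraic_over_mono:
  assumes "algebraic_over Z T u" "T \<subseteq> T'" "finite T'"
  shows "algebraic_over Z T' u"
proof -
  obtain m e c where "\<forall>l\<le>m. poly_in T e (c l)" "\<not> vanishes_on Z (c m)" "\<forall>v\<in>Z. (\<Sum>l\<le>m. c l v * (v!u)^l) = 0"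
    using assms(1) unfolding algebraic_over_def by blast
  moreover have "\<forall>l\<le>m. poly_in T' e (c l)" using calculation(1) poly_in_mono[OF _ assms(2) order_refl assms(3)] by blast
  ultimately show ?thesis unfolding algebraic_over_def by blast
qed

text \<open>An \<open>O(D\<^sup>k)\<close> bound on the Hilbert function of \<open>Z\<close> in the variables \<open>T\<close>, after localising at
  a polynomial \<open>A\<close> that does not vanish on \<open>Z\<close>.\<close>

definition growth_bounded :: "complex list set \<Rightarrow> nat set \<Rightarrow> nat \<Rightarrow> bool" where
  "growth_bounded Z T k \<longleftrightarrow> (\<exists>A c. poly_fun n A \<and> \<not> vanishes_on Z A \<and> (\<forall>D. \<exists>N B. finite B \<and> card B \<le> c * (D+1)^k \<and>
       (\<forall>\<alpha>\<in>exp_box T D. span_on Z B (\<lambda>v. A v ^ N * monom_fun \<alpha> v))))"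

lemma growth_bounded_trivial:
  assumes "T \<subseteq> {..<n}" "Z \<noteq> {}"
  shows "growth_bounded Z T (card T)"
proof -
  have fT: "finite T" using assms(1) finite_subset by blast
  have "\<exists>N B. finite B \<and> card B \<le> 1 * (D+1)^card T \<and> (\<forall>\<alpha>\<in>exp_box T D. span_on Z B (\<lambda>v. 1 ^ N * monom_fun \<alpha> v))" for D
  proof (intro exI conjI)
    show "finite (monom_fun ` exp_box T D)" using finite_exp_box[OF fT] by simp
    show "card (monom_fun ` exp_box T D) \<le> 1 * (D+1)^card T" using card_image_le[OF finite_exp_box[OF fT]] card_exp_box[OF fT] by simp
    show "\<forall>\<alpha>\<in>exp_box T D. span_on Z (monom_fun ` exp_box T D) (\<lambda>v. 1 ^ 0 * monom_fun \<alpha> v)"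
      using span_on_elem finite_exp_box[OF fT] by simp
  qed
  moreover have "poly_fun n (\<lambda>v. 1)" by (rule poly_fun.pf_const)
  moreover have "\<not> vanishes_on Z (\<lambda>v. 1)" using assms(2) unfolding vanishes_on_def by auto
  ultimately show ?thesis unfolding growth_bounded_def by blast
qed

lemma span_on_poly_in:
  assumes "finite T" "finite B" "\<forall>\<beta>\<in>exp_box T E. span_on Z B (\<lambda>v. A v^N * monom_fun \<beta> v)" "poly_in T E h"
  shows "span_on Z B (\<lambda>v. A v^N * h v)"
proof -
  obtain d where d: "\<forall>v. h v = (\<Sum>\<beta>\<in>exp_box T E. d \<beta> * monom_fun \<beta> v)" using assms(4) by (rule poly_in_elim)
  have "span_on Z B (\<lambda>v. \<Sum>\<beta>\<in>exp_box T E. d \<beta> * (A v^N * monom_fun \<beta> v))"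
    by (rule span_on_linear_combination[OF assms(2) finite_exp_box[OF assms(1)]]) (use assms(3) in simp)
  then show ?thesis by (rule span_on_cong[rotated]) (simp add: d sum_distrib_left mult_ac)
qed

definition low_rep :: "complex list set \<Rightarrow> nat set \<Rightarrow> nat \<Rightarrow> nat \<Rightarrow> nat \<Rightarrow> fn \<Rightarrow> bool" where
  "low_rep Z T u m E f \<longleftrightarrow> (\<exists>h. (\<forall>l<m. poly_in T E (h l)) \<and> (\<forall>v\<in>Z. f v = (\<Sum>l<m. h l v * (v!u)^l)))"

lemma low_rep_mono:
  assumes "low_rep Z T u m E f" "E \<le> E'" "finite T"
  shows "low_rep Z T u m E' f"
  using assms poly_in_mono[OF _ order_refl assms(2) assms(3)] unfolding low_rep_def by blast

lemma low_rep_cong: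
  assumes "\<And>v. v \<in> Z \<Longrightarrow> f v = g v" "low_rep Z T u m E g"
  shows "low_rep Z T u m E f"
  using assms unfolding low_rep_def by auto

lemma low_rep_add:
  assumes "low_rep Z T u m E f" "low_rep Z T u m E g"
  shows "low_rep Z T u m E (\<lambda>v. f v + g v)"
proof -
  obtain h where h: "\<forall>l<m. poly_in T E (h l)" "\<forall>v\<in>Z. f v = (\<Sum>l<m. h l v * (v!u)^l)"
    using assms(1) unfolding low_rep_def by blast
  obtain h' where h': "\<forall>l<m. poly_in T E (h' l)" "\<forall>v\<in>Z. g v = (\<Sum>l<m. h' l v * (v!u)^l)"
    using assms(2) unfolding low_rep_def by blast
  have "\<forall>l<m. poly_in T E (\<lambda>v. h l v + h' l v)" using h h' poly_in_add by blast
  moreover have "\<forall>v\<in>Z. f v + g v = (\<Sum>l<m. (h l v + h' l v) * (v!u)^l)"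
    using h h' by (simp add: distrib_right sum.distrib)
  ultimately show ?thesis unfolding low_rep_def by (intro exI[of _ "\<lambda>l v. h l v + h' l v"]) blast
qed

lemma low_rep_scale:
  assumes "low_rep Z T u m E f"
  shows "low_rep Z T u m E (\<lambda>v. k * f v)"
proof -
  obtain h where h: "\<forall>l<m. poly_in T E (h l)" "\<forall>v\<in>Z. f v = (\<Sum>l<m. h l v * (v!u)^l)"
    using assms(1) unfolding low_rep_def by blast
  have "\<forall>l<m. poly_in T E (\<lambda>v. k * h l v)" using h poly_in_scale by blast
  moreover have "\<forall>v\<in>Z. k * f v = (\<Sum>l<m. (k * h l v) * (v!u)^l)"
    using h by (simp add: sum_distrib_left mult_ac)
  ultimately show ?thesis unfolding low_rep_def by (intro exI[of _ "\<lambda>l v. k * h l v"]) blast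
qed

lemma low_rep_zero:
  assumes "finite T"
  shows "low_rep Z T u m E (\<lambda>v. 0)"
  unfolding low_rep_def by (rule exI[of _ "\<lambda>l v. 0"]) (simp add: poly_in_const[OF assms])

lemma low_rep_sum:
  assumes "finite T" "\<And>k. k \<in> K \<Longrightarrow> low_rep Z T u m E (f k)"
  shows "low_rep Z T u m E (\<lambda>v. \<Sum>k\<in>K. f k v)"
  using assms(2)
proof (induction K rule: infinite_finite_induct)
  case (infinite K) then show ?case using low_rep_zero[OF assms(1)] by simp
next
  case empty then show ?case using low_rep_zero[OF assms(1)] by simp
next
  case (insert x F) then show ?case by (simp add: low_rep_add)
qed

lemma low_rep_mul:
  assumes "finite T" "poly_in T E1 g" "low_rep Z T u m E2 f"
  shows "low_rep Z T u m (E1+E2) (\<lambda>v. g v * f v)"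
proof -
  obtain h where h: "\<forall>l<m. poly_in T E2 (h l)" "\<forall>v\<in>Z. f v = (\<Sum>l<m. h l v * (v!u)^l)"
    using assms(3) unfolding low_rep_def by blast
  have "\<forall>l<m. poly_in T (E1+E2) (\<lambda>v. g v * h l v)" using h poly_in_mult[OF assms(1) assms(2)] by blast
  moreover have "\<forall>v\<in>Z. g v * f v = (\<Sum>l<m. (g v * h l v) * (v!u)^l)"
    using h by (simp add: sum_distrib_left mult_ac)
  ultimately show ?thesis unfolding low_rep_def by (intro exI[of _ "\<lambda>l v. g v * h l v"]) blast
qed

lemma low_rep_monomial:
  assumes "finite T" "poly_in T E g" "l0 < m"
  shows "low_rep Z T u m E (\<lambda>v. g v * (v!u)^l0)"
proof -
  define h where "h = (\<lambda>l v. if l = l0 then g v else 0)"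
  have "\<forall>l<m. poly_in T E (h l)"
  proof (intro allI impI)
    fix l assume "l < m"
    show "poly_in T E (h l)"
    proof (cases "l = l0")
      case True then show ?thesis using assms(2) unfolding h_def by simp
    next
      case False then show ?thesis using poly_in_const[OF assms(1)] unfolding h_def by simp
    qed
  qed
  moreover have "\<forall>v\<in>Z. g v * (v!u)^l0 = (\<Sum>l<m. h l v * (v!u)^l)"
  proof
    fix v
    have "(\<Sum>l<m. h l v * (v!u)^l) = (\<Sum>l<m. if l = l0 then g v * (v!u)^l else 0)"
      unfolding h_def by (rule sum.cong) auto
    also have "\<dots> = g v * (v!u)^l0" using assms(3) by (simp add: sum.delta')
    finally show "g v * (v!u)^l0 = (\<Sum>l<m. h l v * (v!u)^l)" by simp
  qed
  ultimately show ?thesis unfolding low_rep_def by blast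
qed

lemma leading_power_low_rep:
  assumes fT: "finite T" and c: "\<forall>l\<le>m. poly_in T e (c l)"
    and rel: "\<forall>v\<in>Z. (\<Sum>l\<le>m. c l v * (v!u)^l) = 0" and m0: "0 < m"
  shows "low_rep Z T u m (j*e) (\<lambda>v. c m v ^ j * (v!u)^j)"
proof (induction j rule: less_induct)
  case (less j)
  show ?case
  proof (cases "j < m")
    case True
    have "poly_in T (j*e) (\<lambda>v. c m v ^ j)" using poly_in_pow[OF fT] c by auto
    then show ?thesis using low_rep_monomial[OF fT _ True] by blast
  next
    case False
    then have jm: "m \<le> j" by simp
    have "low_rep Z T u m (j*e) (\<lambda>v. (c l v * c m v ^ (m-1-l)) * (c m v ^ (j-m+l) * (v!u)^(j-m+l)))"
      if l: "l < m" for l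
    proof -
      have "poly_in T (e + (m-1-l)*e) (\<lambda>v. c l v * c m v ^ (m-1-l))"
        using poly_in_mult[OF fT] poly_in_pow[OF fT] c l by auto
      moreover have "low_rep Z T u m ((j-m+l)*e) (\<lambda>v. c m v ^ (j-m+l) * (v!u)^(j-m+l))"
        using less.IH l jm by simp
      ultimately have "low_rep Z T u m (e + (m-1-l)*e + (j-m+l)*e)
          (\<lambda>v. (c l v * c m v ^ (m-1-l)) * (c m v ^ (j-m+l) * (v!u)^(j-m+l)))"
        by (rule low_rep_mul[OF fT])
      moreover have "1 + (m-1-l) + (j-m+l) = j" using l jm by arith
      then have "(1 + (m-1-l) + (j-m+l)) * e = j*e" by (rule arg_cong[where f="\<lambda>x. x * e"])
      then have "e + (m-1-l)*e + (j-m+l)*e = j*e" by (simp only: add_mult_distrib mult_1_left)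
      ultimately show ?thesis by simp
    qed
    then have "low_rep Z T u m (j*e)
        (\<lambda>v. (-1) * (\<Sum>l<m. (c l v * c m v ^ (m-1-l)) * (c m v ^ (j-m+l) * (v!u)^(j-m+l))))"
      by (intro low_rep_scale low_rep_sum[OF fT]) simp
    then show ?thesis
    proof (rule low_rep_cong[rotated])
      fix v assume "v \<in> Z"
      then have "(\<Sum>l\<le>m. c l v * (v!u)^l) = 0" using rel by blast
      from power_mult_reduce_by_relation[OF this m0 jm]
      show "c m v ^ j * (v!u)^j =
          (-1) * (\<Sum>l<m. (c l v * c m v ^ (m-1-l)) * (c m v ^ (j-m+l) * (v!u)^(j-m+l)))" by simp
    qed
  qed
qed

lemma span_on_low_rep:
  assumes fT: "finite T" and fB: "finite B"
    and B: "\<forall>\<beta>\<in>exp_box T E. span_on Z B (\<lambda>v. A v^N * monom_fun \<beta> v)"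
    and f: "low_rep Z T u m E f"
  shows "span_on Z (times_powers B u m) (\<lambda>v. A v^N * f v)"
proof -
  obtain h where h: "\<forall>l<m. poly_in T E (h l)" "\<forall>v\<in>Z. f v = (\<Sum>l<m. h l v * (v!u)^l)"
    using f unfolding low_rep_def by blast
  have each: "span_on Z (times_powers B u m) (\<lambda>v. (v!u)^l * (A v^N * h l v))" if l: "l \<in> {..<m}" for l
  proof -
    have "span_on Z B (\<lambda>v. A v^N * h l v)" using span_on_poly_in[OF fT fB B] h(1) l by simp
    then have "span_on Z ((\<lambda>b v. (v!u)^l * b v) ` B) (\<lambda>v. (v!u)^l * (A v^N * h l v))"
      by (rule span_on_image_mult[OF fB])
    moreover have "(\<lambda>b v. (v!u)^l * b v) ` B \<subseteq> times_powers B u m"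
      unfolding times_powers_def using l by force
    ultimately show ?thesis using span_on_mono[OF finite_times_powers[OF fB]] by blast
  qed
  have "span_on Z (times_powers B u m) (\<lambda>v. \<Sum>l\<in>{..<m}. 1 * ((v!u)^l * (A v^N * h l v)))"
    by (rule span_on_linear_combination[OF finite_times_powers[OF fB]]) (use each in auto)
  then show ?thesis
    by (rule span_on_cong[rotated]) (use h(2) in \<open>simp add: sum_distrib_left mult_ac\<close>)
qed

lemma low_rep_leading_power_monom:
  assumes fT: "finite T" and u_lt: "u < n" and uT: "u \<notin> T"
    and c: "\<forall>l\<le>m. poly_in T e (c l)" and rel: "\<forall>v\<in>Z. (\<Sum>l\<le>m. c l v * (v!u)^l) = 0"
    and m0: "0 < m" and \<alpha>: "\<alpha> \<in> exp_box (insert u T) D"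
  shows "low_rep Z T u m (2*D*e + D) (\<lambda>v. c m v^D * monom_fun \<alpha> v)"
proof -
  define j where "j = \<alpha> u"
  define \<alpha>' where "\<alpha>' = \<alpha>(u:=0)"
  have \<alpha>': "\<alpha>' \<in> exp_box T D" using \<alpha> uT unfolding \<alpha>'_def exp_box_def by auto
  have j: "j \<le> D" using \<alpha> unfolding j_def exp_box_def by auto
  have "poly_in T ((D-j)*e + D) (\<lambda>v. c m v^(D-j) * monom_fun \<alpha>' v)"
    using c by (intro poly_in_mult[OF fT] poly_in_pow[OF fT] poly_in_monom_fun[OF fT \<alpha>']) simp
  then have "low_rep Z T u m ((D-j)*e + D + j*e) (\<lambda>v. (c m v^(D-j) * monom_fun \<alpha>' v) * (c m v^j * (v!u)^j))"
    using low_rep_mul[OF fT _ leading_power_low_rep[OF fT c rel m0]] by blast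
  moreover have "(D-j)*e + D + j*e \<le> 2*D*e + D"
    using j by (simp add: add_mult_distrib[symmetric])
  ultimately have "low_rep Z T u m (2*D*e + D) (\<lambda>v. (c m v^(D-j) * monom_fun \<alpha>' v) * (c m v^j * (v!u)^j))"
    using low_rep_mono[OF _ _ fT] by blast
  moreover have "c m v^D * monom_fun \<alpha> v = (c m v^(D-j) * monom_fun \<alpha>' v) * (c m v^j * (v!u)^j)" for v
  proof -
    have "c m v^D = c m v^(D-j) * c m v^j" using j by (simp add: power_add[symmetric])
    moreover have "monom_fun \<alpha> v = monom_fun \<alpha>' v * (v!u)^j"
      unfolding \<alpha>'_def j_def by (rule monom_fun_split[OF u_lt])
    ultimately show ?thesis by (simp add: mult_ac)
  qed
  ultimately show ?thesis by simp
qed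

text \<open>Adjoining a coordinate \<open>x\<^sub>u\<close> that satisfies \<open>c\<^sub>0 + c\<^sub>1 x\<^sub>u + \<dots> + c\<^sub>m x\<^sub>u\<^sup>m = 0\<close> on \<open>Z\<close> changes the localising
  polynomial from \<open>A\<close> to \<open>A c\<^sub>m\<close> and the bound only by the factor \<open>m (2e+1)\<^sup>k\<close>.\<close>

lemma growth_bounded_insert_algebraic:
  assumes pr: "vanishing_ideal_prime Z" and T_lt: "T \<subseteq> {..<n}" and u_lt: "u < n" and uT: "u \<notin> T"
    and al: "algebraic_over Z T u" and G: "growth_bounded Z T k"
  shows "growth_bounded Z (insert u T) k"
proof -
  have fT: "finite T" using T_lt finite_subset by blast
  obtain m e c where c: "\<forall>l\<le>m. poly_in T e (c l)" and nv: "\<not> vanishes_on Z (c m)"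
    and rel: "\<forall>v\<in>Z. (\<Sum>l\<le>m. c l v * (v!u)^l) = 0"
    using al unfolding algebraic_over_def by blast
  have m0: "0 < m" using rel nv unfolding vanishes_on_def by (cases m) auto
  obtain A C where A: "poly_fun n A" "\<not> vanishes_on Z A" and GD: "\<forall>D. \<exists>N B. finite B \<and>
      card B \<le> C*(D+1)^k \<and> (\<forall>\<alpha>\<in>exp_box T D. span_on Z B (\<lambda>v. A v^N * monom_fun \<alpha> v))"
    using G unfolding growth_bounded_def by blast
  define a where "a = c m"
  have pa: "poly_fun n a" using c unfolding a_def by (blast intro: poly_in_poly_fun)
  have "\<exists>N B. finite B \<and> card B \<le> (m * C * (2*e+1)^k) * (D+1)^k \<and>
      (\<forall>\<alpha>\<in>exp_box (insert u T) D. span_on Z B (\<lambda>v. (A v * a v)^N * monom_fun \<alpha> v))" for D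
  proof -
    obtain N B where B: "finite B" "card B \<le> C*(2*D*e + D + 1)^k"
      "\<forall>\<beta>\<in>exp_box T (2*D*e + D). span_on Z B (\<lambda>v. A v^N * monom_fun \<beta> v)"
      using GD by blast
    define B' where "B' = (\<lambda>b v. (A v ^ D * a v ^ N) * b v) ` times_powers B u m"
    have "span_on Z B' (\<lambda>v. (A v * a v)^(N+D) * monom_fun \<alpha> v)" if "\<alpha> \<in> exp_box (insert u T) D" for \<alpha>
    proof -
      have "span_on Z (times_powers B u m) (\<lambda>v. A v^N * (a v^D * monom_fun \<alpha> v))"
        unfolding a_def
        by (rule span_on_low_rep[OF fT B(1,3) low_rep_leading_power_monom[OF fT u_lt uT c rel m0 that]])
      then have "span_on Z B' (\<lambda>v. (A v ^ D * a v ^ N) * (A v^N * (a v^D * monom_fun \<alpha> v)))"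
        unfolding B'_def by (rule span_on_image_mult[OF finite_times_powers[OF B(1)]])
      then show ?thesis by (rule span_on_cong[rotated]) (simp add: power_mult_distrib power_add mult_ac)
    qed
    moreover have "card B' \<le> (m * C * (2*e+1)^k) * (D+1)^k"
    proof -
      have "card B' \<le> card (times_powers B u m)"
        unfolding B'_def by (rule card_image_le[OF finite_times_powers[OF B(1)]])
      also have "\<dots> \<le> card B * m" by (rule card_times_powers[OF B(1)])
      finally show ?thesis using power_count_insert_le[OF B(2)] by (rule le_trans)
    qed
    moreover have "finite B'" unfolding B'_def using finite_times_powers[OF B(1)] by simp
    ultimately show ?thesis by blast
  qed
  moreover have "\<not> vanishes_on Z (\<lambda>v. A v * a v)"
    by (rule vanishing_ideal_prime_mult[OF pr A(1) pa A(2)]) (use nv a_def in simp)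
  ultimately show ?thesis unfolding growth_bounded_def using A(1) pa poly_fun.pf_mult by blast
qed

lemma growth_bounded_three_steps:
  assumes pr: "vanishing_ideal_prime Z" and T0: "T0 \<subseteq> {..<n}" "card T0 = k"
    and u: "u1 \<notin> T0" "u2 \<notin> insert u1 T0" "u3 \<notin> insert u2 (insert u1 T0)" "u1 < n" "u2 < n" "u3 < n"
    and a1: "algebraic_over Z S1 u1" "S1 \<subseteq> T0"
    and a2: "algebraic_over Z S2 u2" "S2 \<subseteq> insert u1 T0"
    and a3: "algebraic_over Z S3 u3" "S3 \<subseteq> insert u2 (insert u1 T0)"
    and all: "insert u3 (insert u2 (insert u1 T0)) = {..<n}"
  shows "growth_bounded Z {..<n} k"
proof -
  have ne: "Z \<noteq> {}" using pr unfolding vanishing_ideal_prime_def by blast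
  have f0: "finite T0" using T0(1) finite_subset by blast
  have T1: "insert u1 T0 \<subseteq> {..<n}" and T2: "insert u2 (insert u1 T0) \<subseteq> {..<n}" using T0 u by auto
  have "growth_bounded Z T0 k" using growth_bounded_trivial[OF T0(1) ne] T0(2) by simp
  then have "growth_bounded Z (insert u1 T0) k"
    by (rule growth_bounded_insert_algebraic[OF pr T0(1) u(4) u(1) algebraic_over_mono[OF a1 f0]])
  then have "growth_bounded Z (insert u2 (insert u1 T0)) k"
    by (rule growth_bounded_insert_algebraic[OF pr T1 u(5) u(2) algebraic_over_mono[OF a2 finite.insertI[OF f0]]])
  then have "growth_bounded Z (insert u3 (insert u2 (insert u1 T0))) k"
    by (rule growth_bounded_insert_algebraic[OF pr T2 u(6) u(3) algebraic_over_mono[OF a3 finite.insertI[OF finite.insertI[OF f0]]]])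
  then show ?thesis using all by simp
qed

section \<open>Chains of irreducible closed sets\<close>

lemma alg_indep_on_extend_bounded:
  assumes pr: "vanishing_ideal_prime Z'" and sub: "Z \<subseteq> Z'" and ind: "alg_indep_on Z r g"
    and vp: "vanishes_on Z p" and nvp: "\<not> vanishes_on Z' p"
    and pp: "poly_fun n p" and pg: "\<forall>i<r. poly_fun n (g i)"
    and "finite S" "\<forall>\<alpha>\<in>S. \<forall>i\<ge>Suc r. \<alpha> i = 0" "\<forall>\<alpha>\<in>S. \<alpha> r \<le> d"
    and "\<forall>v\<in>Z'. (\<Sum>\<alpha>\<in>S. C \<alpha> * monom_of (g(r:=p)) (Suc r) \<alpha> v) = 0"
  shows "\<forall>\<alpha>\<in>S. C \<alpha> = 0"
  using assms(8-)
proof (induction d arbitrary: S C)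
  case 0
  have "C \<alpha> = 0" if "\<alpha> \<in> S" for \<alpha>
  proof (rule alg_indep_on_extend_degree0_coeffs[OF sub ind vp "0.prems"(1,2) "0.prems"(4) that])
    show "\<alpha> r = 0" using "0.prems"(3) that by simp
  qed
  then show ?case by blast
next
  case (Suc d)
  note fS = Suc.prems(1) and sup = Suc.prems(2) and z = Suc.prems(4)
  have C0: "C \<alpha> = 0" if "\<alpha> \<in> S" "\<alpha> r = 0" for \<alpha>
    by (rule alg_indep_on_extend_degree0_coeffs[OF sub ind vp fS sup z that])
  txt \<open>Every remaining monomial contains the factor \<open>p\<close>; dividing it out lowers the exponent of \<open>p\<close>.\<close>
  define S' where "S' = {\<alpha>\<in>S. \<alpha> r \<noteq> 0}"
  define S'' where "S'' = (\<lambda>\<alpha>. \<alpha>(r := \<alpha> r - 1)) ` S'"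
  define E where "E = (\<lambda>v. \<Sum>\<beta>\<in>S''. C (\<beta>(r := Suc (\<beta> r))) * monom_of (g(r:=p)) (Suc r) \<beta> v)"
  have factor: "(\<Sum>\<alpha>\<in>S. C \<alpha> * monom_of (g(r:=p)) (Suc r) \<alpha> v) = p v * E v" for v
  proof -
    have "(\<Sum>\<alpha>\<in>S. C \<alpha> * monom_of (g(r:=p)) (Suc r) \<alpha> v) = (\<Sum>\<alpha>\<in>S'. C \<alpha> * monom_of (g(r:=p)) (Suc r) \<alpha> v)"
    proof (rule sum.mono_neutral_right[OF fS])
      show "S' \<subseteq> S" unfolding S'_def by blast
      show "\<forall>\<alpha>\<in>S - S'. C \<alpha> * monom_of (g(r:=p)) (Suc r) \<alpha> v = 0" using C0 unfolding S'_def by simp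
    qed
    also have "\<dots> = p v * E v"
      unfolding E_def S''_def by (rule monom_of_upd_sum_factor) (use fS in \<open>auto simp: S'_def\<close>)
    finally show ?thesis .
  qed
  have pG: "poly_fun n ((g(r:=p)) i)" if "i < Suc r" for i using pg pp that by auto
  have "poly_fun n E" unfolding E_def
    by (rule poly_fun_sum) (intro poly_fun.pf_mult poly_fun.pf_const poly_fun_monom_of pG)
  moreover have "vanishes_on Z' (\<lambda>v. p v * E v)"
    unfolding vanishes_on_def using z by (simp only: factor[symmetric])
  ultimately have vE: "vanishes_on Z' E" using pr pp nvp unfolding vanishing_ideal_prime_def by blast
  have S'': "finite S''" "\<forall>\<beta>\<in>S''. \<forall>i\<ge>Suc r. \<beta> i = 0" "\<forall>\<beta>\<in>S''. \<beta> r \<le> d"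
    using fS sup Suc.prems(3) unfolding S''_def S'_def by auto
  have IH: "\<forall>\<beta>\<in>S''. C (\<beta>(r := Suc (\<beta> r))) = 0"
    by (rule Suc.IH[of S'' "\<lambda>\<beta>. C (\<beta>(r := Suc (\<beta> r)))", OF S'' vE[unfolded vanishes_on_def E_def]])
  have "C \<alpha> = 0" if "\<alpha> \<in> S'" for \<alpha>
  proof -
    have eq: "(\<alpha>(r := \<alpha> r - 1))(r := Suc ((\<alpha>(r := \<alpha> r - 1)) r)) = \<alpha>"
      using that unfolding S'_def by (auto simp: fun_eq_iff)
    have "C ((\<alpha>(r := \<alpha> r - 1))(r := Suc ((\<alpha>(r := \<alpha> r - 1)) r))) = 0"
      using IH that unfolding S''_def by blast
    then show ?thesis by (simp only: eq)
  qed
  then show ?case using C0 unfolding S'_def by blast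
qed

lemma alg_indep_on_extend:
  assumes pr: "vanishing_ideal_prime Z'" and sub: "Z \<subseteq> Z'" and ind: "alg_indep_on Z r g"
    and vp: "vanishes_on Z p" and nvp: "\<not> vanishes_on Z' p"
    and pp: "poly_fun n p" and pg: "\<forall>i<r. poly_fun n (g i)"
  shows "alg_indep_on Z' (Suc r) (g(r:=p))"
  unfolding alg_indep_on_def
proof (intro allI impI)
  fix S C assume "finite S" "\<forall>\<alpha>\<in>S. \<forall>i\<ge>Suc r. \<alpha> i = 0"
    "\<forall>v\<in>Z'. (\<Sum>\<alpha>\<in>S. C \<alpha> * monom_of (g(r:=p)) (Suc r) \<alpha> v) = 0"
  moreover have "\<forall>\<alpha>\<in>S. \<alpha> r \<le> Max ((\<lambda>\<alpha>. \<alpha> r) ` S)" using \<open>finite S\<close> by auto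
  ultimately show "\<forall>\<alpha>\<in>S. C \<alpha> = 0" using alg_indep_on_extend_bounded[OF assms] by blast
qed

lemma growth_bounded_not_alg_indep:
  assumes pr: "vanishing_ideal_prime Z" and G: "growth_bounded Z {..<n} k"
    and pg: "\<forall>i<Suc k. poly_fun n (g i)"
  shows "\<not> alg_indep_on Z (Suc k) g"
proof
  assume ind: "alg_indep_on Z (Suc k) g"
  have "\<forall>i\<in>{..<Suc k}. \<exists>D. poly_in {..<n} D (g i)" using pg poly_fun_poly_in by blast
  then obtain e where ge: "\<forall>i<Suc k. poly_in {..<n} e (g i)"
    using poly_in_uniform_degree[OF finite_lessThan finite_lessThan] by blast
  obtain A C0 where A: "poly_fun n A" "\<not> vanishes_on Z A" and GD: "\<forall>D. \<exists>N B. finite B \<and>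
      card B \<le> C0*(D+1)^k \<and> (\<forall>\<alpha>\<in>exp_box {..<n} D. span_on Z B (\<lambda>v. A v^N * monom_fun \<alpha> v))"
    using G unfolding growth_bounded_def by blast
  txt \<open>The \<open>(D+1)\<^bsup>k+1\<^esup>\<close> monomials in \<open>g\<close> with exponents \<open>\<le> D\<close> have degree \<open>\<le> (k+1) D e\<close> in
    the coordinates; for this \<open>D\<close> they outnumber the bound \<open>C\<^sub>0 ((k+1) D e + 1)\<^sup>k\<close>.\<close>
  define D where "D = C0 * (Suc k*e+1)^k"
  define S where "S = exp_box {..<Suc k} D"
  have fS: "finite S" unfolding S_def by (simp add: finite_exp_box)
  obtain N B where B: "finite B" "card B \<le> C0*(Suc k*D*e+1)^k"
    "\<forall>\<alpha>\<in>exp_box {..<n} (Suc k*D*e). span_on Z B (\<lambda>v. A v^N * monom_fun \<alpha> v)"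
    using GD by blast
  have sp: "\<forall>\<beta>\<in>S. span_on Z B (\<lambda>v. A v^N * monom_of g (Suc k) \<beta> v)"
    using span_on_poly_in[OF finite_lessThan B(1) B(3)] poly_in_monom_of[OF finite_lessThan ge]
    unfolding S_def by blast
  have "card B < card S"
    using B(2) power_count_lt[OF D_def] by (simp add: S_def card_exp_box)
  then obtain l where l: "\<exists>\<beta>\<in>S. l \<beta> \<noteq> 0"
    and rel: "\<forall>v\<in>Z. (\<Sum>\<beta>\<in>S. l \<beta> * (A v^N * monom_of g (Suc k) \<beta> v)) = 0"
    using span_on_card_lt_dependent[OF fS B(1) _ sp] by blast
  define Q where "Q = (\<lambda>v. \<Sum>\<beta>\<in>S. l \<beta> * monom_of g (Suc k) \<beta> v)"
  have pQ: "poly_fun n Q" unfolding Q_def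
    by (rule poly_fun_sum) (intro poly_fun.pf_mult poly_fun.pf_const poly_fun_monom_of, use pg in auto)
  have "vanishes_on Z (\<lambda>v. A v^N * Q v)"
    using rel unfolding vanishes_on_def Q_def by (simp add: sum_distrib_left mult_ac)
  moreover have "\<not> vanishes_on Z (\<lambda>v. A v^N)" by (rule vanishing_ideal_prime_power[OF pr A])
  ultimately have "vanishes_on Z Q"
    using pr poly_fun_pow[OF A(1)] pQ unfolding vanishing_ideal_prime_def by blast
  moreover have "\<forall>\<beta>\<in>S. \<forall>i\<ge>Suc k. \<beta> i = 0" unfolding S_def exp_box_def by auto
  ultimately have "\<forall>\<beta>\<in>S. l \<beta> = 0" using ind fS unfolding alg_indep_on_def vanishes_on_def Q_def by blast
  then show False using l by blast
qed

lemma zariski_chain_alg_indep: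
  assumes "\<forall>i\<le>r. zariski_irreducible n (Z i)" "\<forall>i<r. Z i \<subset> Z (Suc i)"
  shows "\<exists>g. alg_indep_on (Z r) r g \<and> (\<forall>j<r. poly_fun n (g j))"
  using assms
proof (induction r)
  case 0
  then have "Z 0 \<noteq> {}" unfolding zariski_irreducible_def by auto
  then show ?case using alg_indep_on_0 by blast
next
  case (Suc r)
  then obtain g where g: "alg_indep_on (Z r) r g" "\<forall>j<r. poly_fun n (g j)" by auto
  have ss: "Z r \<subset> Z (Suc r)" using Suc.prems by blast
  obtain p where p: "poly_fun n p" "vanishes_on (Z r) p" "\<not> vanishes_on (Z (Suc r)) p"
    using zariski_closed_psubset_separating[OF _ _ ss] Suc.prems
    unfolding zariski_irreducible_def by (metis le_SucI order_refl)
  have pr: "vanishing_ideal_prime (Z (Suc r))"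
    using Suc.prems zariski_irreducible_vanishing_ideal_prime by blast
  have "alg_indep_on (Z (Suc r)) (Suc r) (g(r:=p))"
    by (rule alg_indep_on_extend[OF pr _ g(1) p(2,3,1)]) (use ss g in auto)
  moreover have "\<forall>j<Suc r. poly_fun n ((g(r:=p)) j)" using g p by (auto simp: less_Suc_eq)
  ultimately show ?case by blast
qed

lemma zariski_dim_le_if_growth_bounded:
  assumes "\<And>Z. zariski_irreducible n Z \<Longrightarrow> Z \<subseteq> S \<Longrightarrow> growth_bounded Z {..<n} k"
  shows "zariski_dim n S \<le> k"
  unfolding zariski_dim_def
proof (rule Sup_least)
  fix x assume "x \<in> {enat m |m. \<exists>Z. (\<forall>i\<le>m. zariski_irreducible n (Z i) \<and> Z i \<subseteq> S) \<and>
                                    (\<forall>i<m. Z i \<subset> Z (Suc i))}"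
  then obtain m Z where x: "x = enat m" and Z: "\<forall>i\<le>m. zariski_irreducible n (Z i) \<and> Z i \<subseteq> S"
    and ch: "\<forall>i<m. Z i \<subset> Z (Suc i)" by blast
  show "x \<le> enat k"
  proof (rule ccontr)
    assume "\<not> x \<le> enat k"
    then have km: "Suc k \<le> m" using x by simp
    obtain g where g: "alg_indep_on (Z (Suc k)) (Suc k) g" "\<forall>j<Suc k. poly_fun n (g j)"
      using zariski_chain_alg_indep[of "Suc k" Z] Z ch km by auto
    have "vanishing_ideal_prime (Z (Suc k))" "growth_bounded (Z (Suc k)) {..<n} k"
      using Z km zariski_irreducible_vanishing_ideal_prime assms by auto
    then show False using growth_bounded_not_alg_indep g by blast
  qed
qed

section \<open>Coordinates made algebraic by a vanishing polynomial\<close>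

lemma algebraic_over_of_vanishing_poly:
  fixes p :: "complex poly"
  assumes "p \<noteq> 0" "Z \<noteq> {}" "vanishes_on Z (\<lambda>v. poly p (v!i))"
  shows "algebraic_over Z {} i"
proof (rule algebraic_overI[of "{}" "degree p" "\<lambda>l v. coeff p l"])
  show "\<forall>l\<le>degree p. poly_in_vars {} (\<lambda>v. coeff p l)" using poly_in_vars_const by auto
  show "\<exists>l\<le>degree p. \<not> vanishes_on Z (\<lambda>v. coeff p l)"
    using assms(1,2) unfolding vanishes_on_def by (intro exI[of _ "degree p"]) auto
  show "\<forall>v\<in>Z. (\<Sum>l\<le>degree p. coeff p l * (v!i)^l) = 0"
    using assms(3) unfolding vanishes_on_def by (simp add: poly_altdef)
qed simp

lemma algebraic_over_of_vanishing_eval2: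
  fixes q :: "complex poly poly"
  assumes "q \<noteq> 0" "i < n" "Z \<noteq> {}" "vanishes_on Z (\<lambda>v. eval2 q (v!i) (v!j))"
  shows "algebraic_over Z {i} j \<or> algebraic_over Z {} i"
proof (cases "\<exists>l\<le>degree q. \<not> vanishes_on Z (\<lambda>v. poly (coeff q l) (v!i))")
  case True
  have "algebraic_over Z {i} j"
  proof (rule algebraic_overI[of "{i}" "degree q" "\<lambda>l v. poly (coeff q l) (v!i)"])
    show "\<forall>l\<le>degree q. poly_in_vars {i} (\<lambda>v. poly (coeff q l) (v!i))" using poly_in_vars_poly assms(2) by auto
    show "\<forall>v\<in>Z. (\<Sum>l\<le>degree q. poly (coeff q l) (v!i) * (v!j)^l) = 0"
      using assms(4) unfolding vanishes_on_def by (simp add: eval2_expand)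
  qed (use True in auto)
  then show ?thesis by blast
next
  case False
  then have "vanishes_on Z (\<lambda>v. poly (coeff q (degree q)) (v!i))" by auto
  moreover have "coeff q (degree q) \<noteq> 0" using assms(1) by simp
  ultimately show ?thesis using algebraic_over_of_vanishing_poly assms(3) by blast
qed

lemma algebraic_over_fst_of_vanishing_coeffs:
  fixes F :: "complex poly poly poly"
  assumes irr: "irreducible F" and dF: "degree F \<noteq> 0" and ne: "Z \<noteq> {}"
    and allv: "\<And>l. vanishes_on Z (\<lambda>v. eval2 (coeff F l) (v!i) (v!j))"
  shows "algebraic_over Z {} i"
proof -
  define S where "S = coeff F ` {..degree F}"
  have fS: "finite S" unfolding S_def by simp
  have nzS: "\<exists>f\<in>S. f \<noteq> 0" unfolding S_def using dF
    by (intro bexI[of _ "coeff F (degree F)"]) (auto simp: leading_coeff_0_iff)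
  have "is_unit d" if "\<forall>f\<in>S. d dvd f" for d
  proof -
    have "d dvd coeff F l" for l
      using that by (cases "l \<le> degree F") (auto simp: S_def coeff_eq_0)
    then show ?thesis using irreducible_coeff_divisor_unit[OF irr dF] by blast
  qed
  then obtain c r where lr: "r \<noteq> 0" "(\<Sum>f\<in>S. c f * f) = [:r:]"
    using coprime_set_const_combination[OF fS nzS] by blast
  have "poly r (v!i) = 0" if v: "v \<in> Z" for v
  proof -
    have "poly r (v!i) = eval2 [:r:] (v!i) (v!j)" by (simp add: eval2_const)
    also have "\<dots> = (\<Sum>f\<in>S. eval2 (c f) (v!i) (v!j) * eval2 f (v!i) (v!j))"
      by (simp add: lr(2)[symmetric] eval2_sum eval2_mult)
    also have "\<dots> = 0"
      using allv v unfolding S_def vanishes_on_def by (intro sum.neutral) auto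
    finally show ?thesis .
  qed
  then show ?thesis
    using algebraic_over_of_vanishing_poly lr(1) ne unfolding vanishes_on_def by blast
qed

text \<open>At a point of \<open>Z\<close> with \<open>x = a\<close> some coefficient of \<open>F\<close> in \<open>\<complex>[x]\<close> is nonzero, since \<open>x - a\<close>
  cannot divide the irreducible \<open>F\<close>; it gives a nontrivial relation for \<open>y\<close> over \<open>x\<close>.\<close>

lemma algebraic_over_snd_of_vanishing_coeffs:
  fixes F :: "complex poly poly poly"
  assumes irr: "irreducible F" and dF: "degree F \<noteq> 0" and i_lt: "i < n" and ne: "Z \<noteq> {}"
    and allv: "\<And>l. vanishes_on Z (\<lambda>v. eval2 (coeff F l) (v!i) (v!j))"
  shows "algebraic_over Z {i} j"
proof -
  obtain w where w: "w \<in> Z" using ne by blast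
  obtain l t where "poly (coeff (coeff F l) t) (w!i) \<noteq> 0"
    using irreducible_coeff_coeff_nonroot[OF irr dF] by blast
  then have nv: "\<not> vanishes_on Z (\<lambda>v. poly (coeff (coeff F l) t) (v!i))"
    using w unfolding vanishes_on_def by blast
  have t: "t \<le> degree (coeff F l)"
  proof (rule ccontr)
    assume "\<not> t \<le> degree (coeff F l)"
    then show False using nv by (simp add: coeff_eq_0 vanishes_on_def)
  qed
  show ?thesis
  proof (rule algebraic_overI[of "{i}" "degree (coeff F l)" "\<lambda>t v. poly (coeff (coeff F l) t) (v!i)"])
    show "\<forall>t\<le>degree (coeff F l). poly_in_vars {i} (\<lambda>v. poly (coeff (coeff F l) t) (v!i))"
      using poly_in_vars_poly i_lt by auto
    show "\<forall>v\<in>Z. (\<Sum>t\<le>degree (coeff F l). poly (coeff (coeff F l) t) (v!i) * (v!j)^t) = 0"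
      using allv[of l] unfolding vanishes_on_def by (simp add: eval2_expand)
  qed (use nv t in auto)
qed

lemma algebraic_over_of_vanishing_eval3:
  fixes F :: "complex poly poly poly"
  assumes irr: "irreducible F" and dF: "degree F \<noteq> 0"
    and i_lt: "i < n" and j_lt: "j < n" and ne: "Z \<noteq> {}"
    and vF: "vanishes_on Z (\<lambda>v. eval3 F (v!i) (v!j) (v!k))"
  shows "algebraic_over Z {i,j} k \<or> (algebraic_over Z {} i \<and> algebraic_over Z {i} j)"
proof (cases "\<exists>l. \<not> vanishes_on Z (\<lambda>v. eval2 (coeff F l) (v!i) (v!j))")
  case True
  then obtain l where l: "\<not> vanishes_on Z (\<lambda>v. eval2 (coeff F l) (v!i) (v!j))" by blast
  have "l \<le> degree F"
  proof (rule ccontr)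
    assume "\<not> l \<le> degree F"
    then show False using l by (simp add: coeff_eq_0 vanishes_on_def eval2_def)
  qed
  have "algebraic_over Z {i,j} k"
  proof (rule algebraic_overI[of "{i,j}" "degree F" "\<lambda>l v. eval2 (coeff F l) (v!i) (v!j)"])
    show "\<forall>l\<le>degree F. poly_in_vars {i,j} (\<lambda>v. eval2 (coeff F l) (v!i) (v!j))"
      using poly_in_vars_eval2 i_lt j_lt by auto
    show "\<forall>v\<in>Z. (\<Sum>l\<le>degree F. eval2 (coeff F l) (v!i) (v!j) * (v!k)^l) = 0"
      using vF unfolding vanishes_on_def by (simp add: eval3_expand)
  qed (use l \<open>l \<le> degree F\<close> in auto)
  then show ?thesis by blast
next
  case False
  then show ?thesis
    using algebraic_over_fst_of_vanishing_coeffs[OF irr dF ne]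
      algebraic_over_snd_of_vanishing_coeffs[OF irr dF i_lt ne] by blast
qed

end

section \<open>The equations satisfied on \<open>\<rho>(V\<^sub>0)\<close>\<close>

lemma lessThan_6: "{..<6::nat} = {0,1,2,3,4,5}"
  by (auto simp: lessThan_Suc numeral_eq_Suc)

lemma growth_bounded_of_algebraic_cases:
  assumes pr: "vanishing_ideal_prime 6 Z"
    and B1: "algebraic_over 6 Z {0,1} 2 \<or> (algebraic_over 6 Z {} 0 \<and> algebraic_over 6 Z {0} 1)"
    and B2: "algebraic_over 6 Z {3,4} 5 \<or> (algebraic_over 6 Z {} 3 \<and> algebraic_over 6 Z {3} 4)"
    and X: "algebraic_over 6 Z {} 0 \<or> algebraic_over 6 Z {0} 1 \<or> algebraic_over 6 Z {} 3 \<or>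
            algebraic_over 6 Z {3} 4 \<or> algebraic_over 6 Z {0} 4 \<or> algebraic_over 6 Z {3} 1"
  shows "growth_bounded 6 Z {..<6} 3"
proof -
  note s3 = growth_bounded_three_steps[OF pr]
  show ?thesis
  proof (cases "algebraic_over 6 Z {} 0 \<and> algebraic_over 6 Z {0} 1")
    case b1: True
    show ?thesis
    proof (cases "algebraic_over 6 Z {3,4} 5")
      case True
      show ?thesis by (rule s3[of "{2,3,4}" 3 0 1 5 "{}" "{0}" "{3,4}"]) (use b1 True in \<open>auto simp: lessThan_6\<close>)
    next
      case False
      then have "algebraic_over 6 Z {} 3" using B2 by blast
      show ?thesis by (rule s3[of "{2,4,5}" 3 0 1 3 "{}" "{0}" "{}"]) (use b1 \<open>algebraic_over 6 Z {} 3\<close> in \<open>auto simp: lessThan_6\<close>)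
    qed
  next
    case nb1: False
    then have a2: "algebraic_over 6 Z {0,1} 2" using B1 by blast
    show ?thesis
    proof (cases "algebraic_over 6 Z {3,4} 5")
      case False
      then have "algebraic_over 6 Z {} 3" "algebraic_over 6 Z {3} 4" using B2 by blast+
      show ?thesis by (rule s3[of "{0,1,5}" 3 3 4 2 "{}" "{3}" "{0,1}"]) (use a2 \<open>algebraic_over 6 Z {} 3\<close> \<open>algebraic_over 6 Z {3} 4\<close> in \<open>auto simp: lessThan_6\<close>)
    next
      case a5: True
      from X show ?thesis
      proof (elim disjE)
        assume "algebraic_over 6 Z {} 0"
        show ?thesis by (rule s3[of "{1,3,4}" 3 0 2 5 "{}" "{0,1}" "{3,4}"]) (use a2 a5 \<open>algebraic_over 6 Z {} 0\<close> in \<open>auto simp: lessThan_6\<close>)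
      next
        assume "algebraic_over 6 Z {0} 1"
        show ?thesis by (rule s3[of "{0,3,4}" 3 1 2 5 "{0}" "{0,1}" "{3,4}"]) (use a2 a5 \<open>algebraic_over 6 Z {0} 1\<close> in \<open>auto simp: lessThan_6\<close>)
      next
        assume "algebraic_over 6 Z {} 3"
        show ?thesis by (rule s3[of "{0,1,4}" 3 3 2 5 "{}" "{0,1}" "{3,4}"]) (use a2 a5 \<open>algebraic_over 6 Z {} 3\<close> in \<open>auto simp: lessThan_6\<close>)
      next
        assume "algebraic_over 6 Z {3} 4"
        show ?thesis by (rule s3[of "{0,1,3}" 3 4 2 5 "{3}" "{0,1}" "{3,4}"]) (use a2 a5 \<open>algebraic_over 6 Z {3} 4\<close> in \<open>auto simp: lessThan_6\<close>)
      next
        assume "algebraic_over 6 Z {0} 4"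
        show ?thesis by (rule s3[of "{0,1,3}" 3 4 2 5 "{0}" "{0,1}" "{3,4}"]) (use a2 a5 \<open>algebraic_over 6 Z {0} 4\<close> in \<open>auto simp: lessThan_6\<close>)
      next
        assume "algebraic_over 6 Z {3} 1"
        show ?thesis by (rule s3[of "{0,3,4}" 3 1 2 5 "{3}" "{0,1}" "{3,4}"]) (use a2 a5 \<open>algebraic_over 6 Z {3} 1\<close> in \<open>auto simp: lessThan_6\<close>)
      qed
    qed
  qed
qed

text \<open>Points of \<open>\<complex>\<^sup>6\<close> are \<open>w = (x, y, z\<^sub>1, x', y', z\<^sub>4)\<close>, the coordinates kept by \<open>\<rho>\<close>;
  \<open>witness_fun G R w = G(x,y,z\<^sub>1) R(x,y') R(x',y) G(x',y',z\<^sub>4)\<close>.\<close>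

definition witness_fun :: "complex poly poly poly \<Rightarrow> complex poly poly \<Rightarrow> fn" where
  "witness_fun G R w =
     eval3 G (w!0) (w!1) (w!2) * eval2 R (w!0) (w!4) * eval2 R (w!3) (w!1) * eval3 G (w!3) (w!4) (w!5)"

lemma eval2_zero_of_common_zero:
  assumes "A * F + B * G = [:R:]" "eval3 F a b c = 0" "eval3 G a b c = 0"
  shows "eval2 R a b = 0"
proof -
  have "eval2 R a b = eval3 [:R:] a b c" by (simp add: eval3_const)
  also have "\<dots> = eval3 A a b c * eval3 F a b c + eval3 B a b c * eval3 G a b c"
    by (simp add: assms(1)[symmetric] eval3_add eval3_mult)
  finally show ?thesis using assms(2,3) by simp
qed

lemma witness_fun_zero:
  assumes "A * F + B * G = [:R:]"
    and "eval3 F x y z1 = 0" "eval3 F x y' z2 = 0" "eval3 F x' y z3 = 0" "eval3 F x' y' z4 = 0"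
    and "eval3 G x y z1 * eval3 G x y' z2 * eval3 G x' y z3 * eval3 G x' y' z4 = 0"
  shows "witness_fun G R [x, y, z1, x', y', z4] = 0"
  using assms eval2_zero_of_common_zero[OF assms(1), of x y' z2] eval2_zero_of_common_zero[OF assms(1), of x' y z3]
  unfolding witness_fun_def by (auto simp: mult_eq_0_iff)

lemma poly_fun_witness_fun: "poly_fun 6 (witness_fun G R)"
proof -
  have "poly_in_vars 6 {..<6} (witness_fun G R)" unfolding witness_fun_def[abs_def]
    by (intro poly_in_vars_mult poly_in_vars_eval3 poly_in_vars_eval2) auto
  then show ?thesis by (rule poly_in_vars_poly_fun)
qed

lemma poly_fun_eval3_coords: "i < 6 \<Longrightarrow> j < 6 \<Longrightarrow> k < 6 \<Longrightarrow> poly_fun 6 (\<lambda>w. eval3 F (w!i) (w!j) (w!k))"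
  by (rule poly_in_vars_poly_fun[OF poly_in_vars_eval3[of "{..<6}"]]) auto

lemma algebraic_over_of_vanishing_witness:
  assumes pr: "vanishing_ideal_prime 6 Z" and RR: "R \<noteq> 0" and AB: "A * F + B * G = [:R:]"
    and b1: "vanishes_on Z (\<lambda>w. eval3 F (w!0) (w!1) (w!2))"
    and b2: "vanishes_on Z (\<lambda>w. eval3 F (w!3) (w!4) (w!5))"
    and t: "vanishes_on Z (witness_fun G R)"
  shows "algebraic_over 6 Z {} 0 \<or> algebraic_over 6 Z {0} 1 \<or> algebraic_over 6 Z {} 3 \<or>
         algebraic_over 6 Z {3} 4 \<or> algebraic_over 6 Z {0} 4 \<or> algebraic_over 6 Z {3} 1"
proof -
  have ne: "Z \<noteq> {}" using pr unfolding vanishing_ideal_prime_def by blast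
  define f1 where "f1 = (\<lambda>w. eval3 G (w!0) (w!1) (w!2))"
  define f2 where "f2 = (\<lambda>w. eval2 R (w!0) (w!4))"
  define f3 where "f3 = (\<lambda>w. eval2 R (w!3) (w!1))"
  define f4 where "f4 = (\<lambda>w. eval3 G (w!3) (w!4) (w!5))"
  have p1: "poly_fun 6 f1" "poly_fun 6 f4" unfolding f1_def f4_def by (auto intro: poly_fun_eval3_coords)
  have p2: "poly_fun 6 f2" "poly_fun 6 f3" unfolding f2_def f3_def
    by (auto intro!: poly_in_vars_poly_fun[OF poly_in_vars_eval2[of "{..<6}"]])
  have "vanishes_on Z (\<lambda>w. f1 w * f2 w * f3 w * f4 w)"
    using t unfolding witness_fun_def f1_def f2_def f3_def f4_def by simp
  then have "vanishes_on Z f1 \<or> vanishes_on Z f2 \<or> vanishes_on Z f3 \<or> vanishes_on Z f4"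
    using pr p1 p2 poly_fun.pf_mult unfolding vanishing_ideal_prime_def by meson
  then show ?thesis
  proof (elim disjE)
    assume "vanishes_on Z f1"
    then have "vanishes_on Z (\<lambda>w. eval2 R (w!0) (w!1))"
      using b1 eval2_zero_of_common_zero[OF AB] unfolding vanishes_on_def f1_def by blast
    then show ?thesis using algebraic_over_of_vanishing_eval2[OF RR, where n=6 and i=0 and j=1] ne by auto
  next
    assume "vanishes_on Z f2"
    then show ?thesis
      using algebraic_over_of_vanishing_eval2[OF RR, where n=6 and i=0 and j=4] ne unfolding f2_def by auto
  next
    assume "vanishes_on Z f3"
    then show ?thesis
      using algebraic_over_of_vanishing_eval2[OF RR, where n=6 and i=3 and j=1] ne unfolding f3_def by auto
  next
    assume "vanishes_on Z f4"
    then have "vanishes_on Z (\<lambda>w. eval2 R (w!3) (w!4))"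
      using b2 eval2_zero_of_common_zero[OF AB] unfolding vanishes_on_def f4_def by blast
    then show ?thesis using algebraic_over_of_vanishing_eval2[OF RR, where n=6 and i=3 and j=4] ne by auto
  qed
qed

definition witness_set ::
    "complex poly poly poly \<Rightarrow> complex poly poly \<Rightarrow> complex poly poly \<Rightarrow> complex poly poly \<Rightarrow> complex list set" where
  "witness_set F R1 R2 R3 = {w. length w = 6 \<and>
      eval3 F (w!0) (w!1) (w!2) = 0 \<and> eval3 F (w!3) (w!4) (w!5) = 0 \<and>
      witness_fun (pd1 F) R1 w * witness_fun (pd2 F) R2 w * witness_fun (pd3 F) R3 w = 0}"

lemma zariski_closed_witness_set: "zariski_closed 6 (witness_set F R1 R2 R3)"
proof -
  let ?P = "{\<lambda>w. eval3 F (w!0) (w!1) (w!2), \<lambda>w. eval3 F (w!3) (w!4) (w!5),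
             \<lambda>w. witness_fun (pd1 F) R1 w * witness_fun (pd2 F) R2 w * witness_fun (pd3 F) R3 w}"
  have "\<forall>p\<in>?P. poly_fun 6 p"
    by (auto intro!: poly_fun_eval3_coords poly_fun.pf_mult poly_fun_witness_fun)
  moreover have "witness_set F R1 R2 R3 = {w. length w = 6 \<and> (\<forall>p\<in>?P. p w = 0)}"
    unfolding witness_set_def by auto
  ultimately show ?thesis unfolding zariski_closed_def by blast
qed

lemma rho_V0_subset_witness_set:
  assumes "A1 * F + B1 * pd1 F = [:R1:]" "A2 * F + B2 * pd2 F = [:R2:]" "A3 * F + B3 * pd3 F = [:R3:]"
  shows "rho ` V0 F \<subseteq> witness_set F R1 R2 R3"
proof
  fix w assume "w \<in> rho ` V0 F"
  then obtain x x' y y' z1 z2 z3 z4 where w: "w = [x, y, z1, x', y', z4]"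
    and e: "eval3 F x y z1 = 0" "eval3 F x y' z2 = 0" "eval3 F x' y z3 = 0" "eval3 F x' y' z4 = 0"
    and G: "\<exists>G\<in>{pd1 F, pd2 F, pd3 F}.
              eval3 G x y z1 * eval3 G x y' z2 * eval3 G x' y z3 * eval3 G x' y' z4 = 0"
    unfolding V0_def Vi_def V_def rho_def by fastforce
  then show "w \<in> witness_set F R1 R2 R3"
    using witness_fun_zero[OF assms(1) e] witness_fun_zero[OF assms(2) e] witness_fun_zero[OF assms(3) e]
    unfolding witness_set_def w by auto
qed

lemma growth_bounded_witness_set:
  assumes irr: "irreducible F" and dF: "degree F \<noteq> 0"
    and r1: "R1 \<noteq> 0" "A1 * F + B1 * pd1 F = [:R1:]"
    and r2: "R2 \<noteq> 0" "A2 * F + B2 * pd2 F = [:R2:]"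
    and r3: "R3 \<noteq> 0" "A3 * F + B3 * pd3 F = [:R3:]"
    and Z: "zariski_irreducible 6 Z" "Z \<subseteq> witness_set F R1 R2 R3"
  shows "growth_bounded 6 Z {..<6} 3"
proof -
  have pr: "vanishing_ideal_prime 6 Z" by (rule zariski_irreducible_vanishing_ideal_prime[OF Z(1)])
  have ne: "Z \<noteq> {}" using pr unfolding vanishing_ideal_prime_def by blast
  have b1: "vanishes_on Z (\<lambda>w. eval3 F (w!0) (w!1) (w!2))"
    and b2: "vanishes_on Z (\<lambda>w. eval3 F (w!3) (w!4) (w!5))"
    and "vanishes_on Z (\<lambda>w. witness_fun (pd1 F) R1 w * witness_fun (pd2 F) R2 w * witness_fun (pd3 F) R3 w)"
    using Z(2) unfolding witness_set_def vanishes_on_def by auto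
  then have "vanishes_on Z (witness_fun (pd1 F) R1) \<or> vanishes_on Z (witness_fun (pd2 F) R2) \<or>
      vanishes_on Z (witness_fun (pd3 F) R3)"
    using pr poly_fun_witness_fun poly_fun.pf_mult unfolding vanishing_ideal_prime_def by meson
  then have "algebraic_over 6 Z {} 0 \<or> algebraic_over 6 Z {0} 1 \<or> algebraic_over 6 Z {} 3 \<or>
      algebraic_over 6 Z {3} 4 \<or> algebraic_over 6 Z {0} 4 \<or> algebraic_over 6 Z {3} 1"
    using algebraic_over_of_vanishing_witness[OF pr _ _ b1 b2] r1 r2 r3 by blast
  moreover have "algebraic_over 6 Z {0,1} 2 \<or> (algebraic_over 6 Z {} 0 \<and> algebraic_over 6 Z {0} 1)"
    by (rule algebraic_over_of_vanishing_eval3[OF irr dF _ _ ne b1]) auto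
  moreover have "algebraic_over 6 Z {3,4} 5 \<or> (algebraic_over 6 Z {} 3 \<and> algebraic_over 6 Z {3} 4)"
    by (rule algebraic_over_of_vanishing_eval3[OF irr dF _ _ ne b2]) auto
  ultimately show ?thesis using growth_bounded_of_algebraic_cases[OF pr] by blast
qed

theorem lemma3p4:
  fixes F :: "complex poly poly poly"
  assumes "irreducible F"
    and "pd1 F \<noteq> 0" and "pd2 F \<noteq> 0" and "pd3 F \<noteq> 0"
  shows "zariski_dim 6 (zariski_closure 6 (rho ` V0 F)) \<le> 3"
proof -
  have dF: "degree F \<noteq> 0" using assms(4) pderiv_eq_0_iff unfolding pd3_def by blast
  obtain A1 B1 R1 where r1: "R1 \<noteq> 0" "A1 * F + B1 * pd1 F = [:R1:]"
    using irreducible_const_combination[OF assms(1,2) not_dvd_pd1[OF assms(2)]] by blast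
  obtain A2 B2 R2 where r2: "R2 \<noteq> 0" "A2 * F + B2 * pd2 F = [:R2:]"
    using irreducible_const_combination[OF assms(1,3) not_dvd_pd2[OF assms(3)]] by blast
  obtain A3 B3 R3 where r3: "R3 \<noteq> 0" "A3 * F + B3 * pd3 F = [:R3:]"
    using irreducible_const_combination[OF assms(1,4) not_dvd_pd3[OF assms(4)]] by blast
  have "zariski_closure 6 (rho ` V0 F) \<subseteq> witness_set F R1 R2 R3"
    using zariski_closed_witness_set rho_V0_subset_witness_set[OF r1(2) r2(2) r3(2)]
    unfolding zariski_closure_def by blast
  then have "zariski_dim 6 (zariski_closure 6 (rho ` V0 F)) \<le> enat 3"
    using growth_bounded_witness_set[OF assms(1) dF r1 r2 r3]
    by (intro zariski_dim_le_if_growth_bounded) blast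
  then show ?thesis by (simp add: numeral_eq_enat)
qed

end
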